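(* $gr^{(2)}=GL_n(L)^{(2)}\cdot H_n^{(0)}$, i.e. a subspace $W\subset H_n$ belongs to $gr^{(2)}$ if and only if $W=g(t)H_n^{(0)}$ for some $g(t)\in GL_n(L)^{(2)}$.
   Context: Let $e_1,\dots,e_n$ be the standard basis of $\mathbb{C}^n$ and $H_n=\mathbb{C}^n((t))$ the space of formal Laurent series $\sum_jc_jt^j$, $c_j\in\mathbb{C}^n$, $c_j=0$ for $j\ll0$. For $1\le j\le n$, $k\in\mathbb{Z}$ put $v_{-n(k+1)+j-\frac12}:=e_jt^k$, and for $j\in\mathbb{Z}$ let $H_n^{(j)}$ be the space of (possibly infinite) sums $\sum_{m<j}b_mv_m$; in particular $H_n^{(0)}=\mathbb{C}^n[[t]]$. Let $Gr_0$ be the set of linear subspaces $W\subset H_n$ such that for all sufficiently negative $j$ one has $H_n^{(j)}\subset W$ and $\dim W/H_n^{(j)}=-j$, and $gr_0=\{W\in Gr_0: tW\subset W\}$. Define the skew-symmetric bilinear form on $H_n$ by $\langle u(t),v(t)\rangle=i\,\mathrm{Res}_t\sum_{a=1}^nu_a(t)v_a(-t)$, where $u_a,v_a$ are the components and $\mathrm{Res}_t\sum a_it^i=a_{-1}$. Put $Gr^{(2)}=\{W\in Gr_0:\langle u,v\rangle=0\ \forall u,v\in W\}$ and $gr^{(2)}=gr_0\cap Gr^{(2)}$. Let $L=\mathbb{C}[t,t^{-1}]$, $GL_n(L)$ the group of invertible $n\times n$ matrices over $L$ acting on $H_n$ by multiplication, and $GL_n(L)^{(2)}=\{A(t)\in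 GL_n(L): A(-t)=(A(t)^T)^{-1}\}$ the twisted loop group. *)

theory Defs
  imports Complex_Main
begin

text \<open>An element u of H_n = C^n((t)) is encoded as a function u :: nat => int => complex,
  where u a k is the coefficient of e_(a+1) t^k (components a < n; u a = 0 for a >= n),
  and only finitely many negative powers occur.\<close>

type_synonym hvec = "nat \<Rightarrow> int \<Rightarrow> complex"

definition in_H :: "nat \<Rightarrow> hvec \<Rightarrow> bool" where
  "in_H n u \<longleftrightarrow> (\<forall>a k. n \<le> a \<longrightarrow> u a k = 0) \<and> (\<exists>N. \<forall>a k. k < N \<longrightarrow> u a k = 0)"

text \<open>Cauchy product coefficient (finite sum whenever the product is defined, e.g. for
  Laurent series / Laurent polynomials).\<close>
definition conv :: "(int \<Rightarrow> complex) \<Rightarrow> (int \<Rightarrow> complex) \<Rightarrow> int \<Rightarrow> complex" where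
  "conv f g k = (\<Sum>p | f p \<noteq> 0 \<and> g (k - p) \<noteq> 0. f p * g (k - p))"

text \<open>The basis vector e_(a+1) t^k is v_m with m = -n(k+1) + (a+1) - 1/2; we record m + 1/2.\<close>
definition vidx :: "nat \<Rightarrow> nat \<Rightarrow> int \<Rightarrow> int" where
  "vidx n a k = - int n * (k + 1) + int a + 1"

text \<open>H_n^(J): sums of b_m v_m with m < J, i.e. m + 1/2 <= J.\<close>
definition Hsub :: "nat \<Rightarrow> int \<Rightarrow> hvec set" where
  "Hsub n J = {u. in_H n u \<and> (\<forall>a<n. \<forall>k. J < vidx n a k \<longrightarrow> u a k = 0)}"

definition lin_subspace :: "nat \<Rightarrow> hvec set \<Rightarrow> bool" where
  "lin_subspace n W \<longleftrightarrow> W \<subseteq> {u. in_H n u} \<and> (\<lambda>a k. 0) \<in> W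
     \<and> (\<forall>u\<in>W. \<forall>v\<in>W. (\<lambda>a k. u a k + v a k) \<in> W)
     \<and> (\<forall>c::complex. \<forall>u\<in>W. (\<lambda>a k. c * u a k) \<in> W)"

text \<open>dim (W / V) = d: there are d vectors in W forming a basis of W modulo V.\<close>
definition quot_dim :: "hvec set \<Rightarrow> hvec set \<Rightarrow> nat \<Rightarrow> bool" where
  "quot_dim W V d \<longleftrightarrow> (\<exists>f :: nat \<Rightarrow> hvec. (\<forall>i<d. f i \<in> W) \<and>
      (\<forall>w\<in>W. \<exists>!c :: nat \<Rightarrow> complex. (\<forall>i. d \<le> i \<longrightarrow> c i = 0) \<and>
          (\<lambda>a k. w a k - (\<Sum>i<d. c i * f i a k)) \<in> V))"

definition Gr0 :: "nat \<Rightarrow> hvec set set" where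
  "Gr0 n = {W. lin_subspace n W \<and>
     (\<exists>J0 \<le> 0. \<forall>J \<le> J0. Hsub n J \<subseteq> W \<and> quot_dim W (Hsub n J) (nat (- J)))}"

definition tmul :: "hvec \<Rightarrow> hvec" where
  "tmul u = (\<lambda>a k. u a (k - 1))"

definition gr0 :: "nat \<Rightarrow> hvec set set" where
  "gr0 n = {W \<in> Gr0 n. \<forall>u\<in>W. tmul u \<in> W}"

text \<open><u,v> = i Res_t sum_a u_a(t) v_a(-t).\<close>
definition bform :: "nat \<Rightarrow> hvec \<Rightarrow> hvec \<Rightarrow> complex" where
  "bform n u v = \<i> * (\<Sum>a<n. \<Sum>p | u a p \<noteq> 0 \<and> v a (-1 - p) \<noteq> 0.
      u a p * ((-1) powi (-1 - p) * v a (-1 - p)))"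

definition Gr2 :: "nat \<Rightarrow> hvec set set" where
  "Gr2 n = {W \<in> Gr0 n. \<forall>u\<in>W. \<forall>v\<in>W. bform n u v = 0}"

definition gr2 :: "nat \<Rightarrow> hvec set set" where
  "gr2 n = gr0 n \<inter> Gr2 n"

text \<open>n x n matrices over L = C[t,t^-1]: A a b k = coefficient of t^k in entry (a+1,b+1).\<close>
type_synonym lmat = "nat \<Rightarrow> nat \<Rightarrow> int \<Rightarrow> complex"

definition is_Lmat :: "nat \<Rightarrow> lmat \<Rightarrow> bool" where
  "is_Lmat n A \<longleftrightarrow> (\<forall>a b k. (n \<le> a \<or> n \<le> b) \<longrightarrow> A a b k = 0)
      \<and> (\<forall>a b. finite {k. A a b k \<noteq> 0})"

definition mat_mult :: "nat \<Rightarrow> lmat \<Rightarrow> lmat \<Rightarrow> lmat" where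
  "mat_mult n A B = (\<lambda>a b k. \<Sum>c<n. conv (A a c) (B c b) k)"

definition mat_one :: "nat \<Rightarrow> lmat" where
  "mat_one n = (\<lambda>a b k. if a < n \<and> a = b \<and> k = 0 then 1 else 0)"

definition mat_tr :: "lmat \<Rightarrow> lmat" where
  "mat_tr A = (\<lambda>a b k. A b a k)"

text \<open>A(-t).\<close>
definition mat_neg :: "lmat \<Rightarrow> lmat" where
  "mat_neg A = (\<lambda>a b k. (-1) powi k * A a b k)"

definition GL :: "nat \<Rightarrow> lmat set" where
  "GL n = {A. is_Lmat n A \<and> (\<exists>B. is_Lmat n B \<and> mat_mult n A B = mat_one n \<and> mat_mult n B A = mat_one n)}"

text \<open>Twisted loop group: A(-t) = (A(t)^T)^-1.\<close>
definition GL2 :: "nat \<Rightarrow> lmat set" where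
  "GL2 n = {A \<in> GL n. mat_mult n (mat_neg A) (mat_tr A) = mat_one n
                    \<and> mat_mult n (mat_tr A) (mat_neg A) = mat_one n}"

definition act :: "nat \<Rightarrow> lmat \<Rightarrow> hvec \<Rightarrow> hvec" where
  "act n A u = (\<lambda>a k. \<Sum>c<n. conv (A a c) (u c) k)"

end

theory Submission
  imports Defs "HOL-Computational_Algebra.Formal_Laurent_Series" "HOL-Library.Function_Algebras"
begin

unbundle fps_syntax

lemma conv_eq_sum_interval:
  assumes "\<And>k. k < A \<Longrightarrow> f k = 0" and "\<And>k. k < B \<Longrightarrow> g k = 0"
  shows "conv f g n = (\<Sum>i\<in>{A..n-B}. f i * g (n - i))"
  unfolding conv_def
proof (rule sum.mono_neutral_left)
  show "{p. f p \<noteq> 0 \<and> g (n - p) \<noteq> 0} \<subseteq> {A..n - B}"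
    using assms by (auto simp: not_less[symmetric])
qed auto

lemma conv_eq_0_below:
  assumes "\<And>k. k < A \<Longrightarrow> f k = 0" and "\<And>k. k < B \<Longrightarrow> g k = 0" and "n < A + B"
  shows "conv f g n = 0"
  using conv_eq_sum_interval[OF assms(1,2)] assms(3) by simp

lemma fls_times_nth_interval:
  fixes f g :: "'a::comm_ring_1 fls"
  assumes A: "\<And>k. k < A \<Longrightarrow> f $$ k = 0" and B: "\<And>k. k < B \<Longrightarrow> g $$ k = 0"
  shows "(f * g) $$ n = (\<Sum>i\<in>{A..n-B}. f $$ i * g $$ (n - i))"
proof (cases "f = 0 \<or> g = 0")
  case False
  then have "A \<le> fls_subdegree f" "B \<le> fls_subdegree g"
    using fls_subdegree_geI A B by blast+
  then show ?thesis
    unfolding fls_times_nth(2) by (intro sum.mono_neutral_left) auto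
qed auto

lemma conv_eq_fls_times_nth:
  assumes "\<forall>k<A. f k = 0" and "\<forall>k<B. g k = 0"
  shows "conv f g n = (Abs_fls f * Abs_fls g) $$ n"
  using assms conv_eq_sum_interval[of A f B g n]
    fls_times_nth_interval[of A "Abs_fls f" B "Abs_fls g" n]
  by (simp add: nth_Abs_fls_lower_bound)

text \<open>The substitution \<open>t \<mapsto> -t\<close>.\<close>

definition fls_reflect :: "'a::field fls \<Rightarrow> 'a fls" where
  "fls_reflect f = Abs_fls (\<lambda>k. (-1) powi k * f $$ k)"

lemma fls_reflect_nth [simp]: "fls_reflect f $$ k = (-1) powi k * f $$ k"
  unfolding fls_reflect_def
  by (rule nth_Abs_fls_lower_bound[of "fls_subdegree f"]) simp

lemma fls_reflect_times: "fls_reflect (f * g) = fls_reflect f * fls_reflect g"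
proof (rule fls_eqI)
  fix n
  let ?I = "{fls_subdegree f..n - fls_subdegree g}"
  have sign: "(-1::'a) powi n = (-1) powi i * (-1) powi (n - i)" for i
    using power_int_add[of "-1::'a" i "n - i"] by simp
  have "(fls_reflect f * fls_reflect g) $$ n
      = (\<Sum>i\<in>?I. fls_reflect f $$ i * fls_reflect g $$ (n - i))"
    by (rule fls_times_nth_interval) simp_all
  also have "\<dots> = (\<Sum>i\<in>?I. (-1) powi n * (f $$ i * g $$ (n - i)))"
  proof (rule sum.cong)
    fix i show "fls_reflect f $$ i * fls_reflect g $$ (n - i) = (-1) powi n * (f $$ i * g $$ (n - i))"
      by (simp add: sign[of i] mult_ac)
  qed simp
  also have "\<dots> = fls_reflect (f * g) $$ n"
    by (simp add: sum_distrib_left fls_times_nth_interval[of "fls_subdegree f" f "fls_subdegree g" g])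
  finally show "fls_reflect (f * g) $$ n = (fls_reflect f * fls_reflect g) $$ n" ..
qed

lemma fls_reflect_plus: "fls_reflect (f + g) = fls_reflect f + fls_reflect g"
  by (rule fls_eqI) (simp add: algebra_simps)

lemma fls_reflect_uminus: "fls_reflect (- f) = - fls_reflect f"
  by (rule fls_eqI) simp

lemma fls_reflect_minus: "fls_reflect (f - g) = fls_reflect f - fls_reflect g"
  by (rule fls_eqI) (simp add: algebra_simps)

lemma fls_reflect_const [simp]: "fls_reflect (fls_const c) = fls_const c"
  by (rule fls_eqI) simp

lemma fls_reflect_0 [simp]: "fls_reflect 0 = 0"
  by (rule fls_eqI) simp

lemma fls_reflect_1 [simp]: "fls_reflect 1 = 1"
  by (rule fls_eqI) simp

lemma fls_reflect_reflect [simp]: "fls_reflect (fls_reflect f) = f"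
  by (rule fls_eqI) (simp add: mult.assoc[symmetric] power_int_mult_distrib[symmetric])

lemma fls_reflect_sum: "fls_reflect (\<Sum>x\<in>S. f x) = (\<Sum>x\<in>S. fls_reflect (f x))"
  by (induction S rule: infinite_finite_induct) (auto simp: fls_reflect_plus fls_eqI)

lemma fls_reflect_X: "fls_reflect fls_X = - fls_X"
  by (rule fls_eqI) simp

lemma fls_reflect_X_inv: "fls_reflect fls_X_inv = - fls_X_inv"
  by (rule fls_eqI) simp

definition order_ge :: "int \<Rightarrow> hvec \<Rightarrow> bool" where
  "order_ge N u \<longleftrightarrow> (\<forall>a k. k < N \<longrightarrow> u a k = 0)"

lemma order_ge_mono: "order_ge N u \<Longrightarrow> M \<le> N \<Longrightarrow> order_ge M u"
  unfolding order_ge_def by auto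

lemma in_H_iff: "in_H n u \<longleftrightarrow> (\<forall>a k. n \<le> a \<longrightarrow> u a k = 0) \<and> (\<exists>N. order_ge N u)"
  unfolding in_H_def order_ge_def ..

definition vec_fls :: "hvec \<Rightarrow> nat \<Rightarrow> complex fls" where
  "vec_fls u a = Abs_fls (u a)"

definition mat_fls :: "lmat \<Rightarrow> nat \<Rightarrow> nat \<Rightarrow> complex fls" where
  "mat_fls A a b = Abs_fls (A a b)"

lemma vec_fls_nth: "in_H n u \<Longrightarrow> vec_fls u a $$ k = u a k"
  unfolding vec_fls_def in_H_def by (blast intro: nth_Abs_fls_ex_lower_bound)

lemma in_H_eqI:
  assumes "in_H n u" "in_H n v" "\<And>a. a < n \<Longrightarrow> vec_fls u a = vec_fls v a"
  shows "u = v"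
proof (intro ext)
  fix a k
  show "u a k = v a k"
  proof (cases "a < n")
    case True
    then show ?thesis using assms vec_fls_nth by metis
  qed (use assms in \<open>simp add: in_H_def\<close>)
qed

lemma is_Lmat_lower_bound:
  assumes "is_Lmat n A"
  obtains L where "\<And>a b k. k < L \<Longrightarrow> A a b k = 0"
proof -
  let ?S = "\<Union>a<n. \<Union>b<n. {k. A a b k \<noteq> 0}"
  have "finite ?S" using assms unfolding is_Lmat_def by auto
  moreover have "k \<in> ?S" if "A a b k \<noteq> 0" for a b k
  proof -
    have "a < n" "b < n" using assms that unfolding is_Lmat_def by (meson not_le)+
    then show ?thesis using that by blast
  qed
  ultimately show ?thesis
    using that[of "Min (insert 0 ?S)"] by (metis Min_le finite_insert insertCI not_le)
qed

lemma mat_fls_nth: "is_Lmat n A \<Longrightarrow> mat_fls A a b $$ k = A a b k"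
  unfolding mat_fls_def by (metis is_Lmat_lower_bound nth_Abs_fls_lower_bound)

lemma is_Lmat_eqI:
  assumes "is_Lmat n A" "is_Lmat n B" "\<And>a b. a < n \<Longrightarrow> b < n \<Longrightarrow> mat_fls A a b = mat_fls B a b"
  shows "A = B"
proof (intro ext)
  fix a b k
  show "A a b k = B a b k"
  proof (cases "a < n \<and> b < n")
    case True
    then show ?thesis using assms mat_fls_nth by metis
  qed (use assms in \<open>auto simp: is_Lmat_def not_less\<close>)
qed

lemma order_ge_act:
  assumes "\<And>a b k. k < L \<Longrightarrow> A a b k = 0" and "order_ge N u"
  shows "order_ge (L + N) (act n A u)"
  unfolding order_ge_def act_def
proof (intro allI impI sum.neutral ballI)
  fix a k c assume "k < L + N"
  then show "conv (A a c) (u c) k = 0"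
    by (rule conv_eq_0_below[rotated 2]) (use assms in \<open>auto simp: order_ge_def\<close>)
qed

lemma in_H_act:
  assumes A: "is_Lmat n A" and u: "in_H n u"
  shows "in_H n (act n A u)"
proof -
  obtain L where "\<And>a b k. k < L \<Longrightarrow> A a b k = 0" using is_Lmat_lower_bound[OF A] by blast
  moreover obtain N where "order_ge N u" using u unfolding in_H_iff by blast
  ultimately have "order_ge (L + N) (act n A u)" by (rule order_ge_act)
  moreover have "act n A u a k = 0" if "n \<le> a" for a k
    using A that unfolding act_def is_Lmat_def conv_def by simp
  ultimately show ?thesis unfolding in_H_iff by blast
qed

lemma vec_fls_act:
  assumes A: "is_Lmat n A" and u: "in_H n u"
  shows "vec_fls (act n A u) a = (\<Sum>c<n. mat_fls A a c * vec_fls u c)"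
proof (rule fls_eqI)
  fix k
  obtain L where L: "\<forall>k<L. A a c k = 0" for c using is_Lmat_lower_bound[OF A] by metis
  obtain N where N: "\<forall>k<N. u c k = 0" for c using u unfolding in_H_def by blast
  have "vec_fls (act n A u) a $$ k = (\<Sum>c<n. conv (A a c) (u c) k)"
    using vec_fls_nth[OF in_H_act[OF A u]] unfolding act_def by simp
  also have "\<dots> = (\<Sum>c<n. mat_fls A a c * vec_fls u c) $$ k"
    unfolding fls_nth_sum mat_fls_def vec_fls_def using conv_eq_fls_times_nth[OF L N] by simp
  finally show "vec_fls (act n A u) a $$ k = (\<Sum>c<n. mat_fls A a c * vec_fls u c) $$ k" .
qed

lemma is_Lmat_mat_mult:
  assumes A: "is_Lmat n A" and B: "is_Lmat n B"
  shows "is_Lmat n (mat_mult n A B)"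
proof -
  have fin: "finite {k. mat_mult n A B a b k \<noteq> 0}" for a b
  proof -
    let ?K = "\<lambda>C a b. {k. C a b k \<noteq> 0}"
    have "{k. mat_mult n A B a b k \<noteq> 0} \<subseteq> (\<Union>c<n. (\<lambda>(i, j). i + j) ` (?K A a c \<times> ?K B c b))"
      unfolding mat_mult_def conv_def
      by (force elim!: sum.not_neutral_contains_not_neutral intro: rev_image_eqI[of "(_, _)"])
    moreover have "finite (\<Union>c<n. (\<lambda>(i, j). i + j) ` (?K A a c \<times> ?K B c b))"
      using A B unfolding is_Lmat_def by (intro finite_UN_I finite_imageI finite_cartesian_product) auto
    ultimately show ?thesis by (rule finite_subset)
  qed
  moreover have "mat_mult n A B a b k = 0" if "n \<le> a \<or> n \<le> b" for a b k
    using A B that unfolding mat_mult_def is_Lmat_def conv_def by auto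
  ultimately show ?thesis unfolding is_Lmat_def by blast
qed

lemma mat_fls_mat_mult:
  assumes A: "is_Lmat n A" and B: "is_Lmat n B"
  shows "mat_fls (mat_mult n A B) a b = (\<Sum>c<n. mat_fls A a c * mat_fls B c b)"
proof (rule fls_eqI)
  fix k
  obtain L where L: "\<forall>k<L. A a c k = 0" for c using is_Lmat_lower_bound[OF A] by metis
  obtain M where M: "\<forall>k<M. B c b k = 0" for c using is_Lmat_lower_bound[OF B] by metis
  have "mat_fls (mat_mult n A B) a b $$ k = (\<Sum>c<n. conv (A a c) (B c b) k)"
    using mat_fls_nth[OF is_Lmat_mat_mult[OF A B]] unfolding mat_mult_def by simp
  also have "\<dots> = (\<Sum>c<n. mat_fls A a c * mat_fls B c b) $$ k"
    unfolding fls_nth_sum mat_fls_def using conv_eq_fls_times_nth[OF L M] by simp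
  finally show "mat_fls (mat_mult n A B) a b $$ k = (\<Sum>c<n. mat_fls A a c * mat_fls B c b) $$ k" .
qed

lemma is_Lmat_mat_one: "is_Lmat n (mat_one n)"
proof -
  have "{k. mat_one n a b k \<noteq> 0} \<subseteq> {0}" for a b by (auto simp: mat_one_def)
  then show ?thesis unfolding is_Lmat_def by (auto simp: mat_one_def intro: finite_subset)
qed

lemma mat_fls_mat_one: "mat_fls (mat_one n) a b = (if a < n \<and> a = b then 1 else 0)"
  by (rule fls_eqI) (simp only: mat_fls_nth[OF is_Lmat_mat_one], simp add: mat_one_def)

lemma is_Lmat_mat_tr: "is_Lmat n A \<Longrightarrow> is_Lmat n (mat_tr A)"
  unfolding is_Lmat_def mat_tr_def by auto

lemma mat_fls_mat_tr:
  assumes "is_Lmat n A" shows "mat_fls (mat_tr A) a b = mat_fls A b a"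
  by (rule fls_eqI) (simp only: mat_fls_nth[OF is_Lmat_mat_tr[OF assms]] mat_fls_nth[OF assms],
      simp add: mat_tr_def)

lemma is_Lmat_mat_neg: "is_Lmat n A \<Longrightarrow> is_Lmat n (mat_neg A)"
  unfolding is_Lmat_def mat_neg_def by auto

lemma mat_fls_mat_neg:
  assumes "is_Lmat n A" shows "mat_fls (mat_neg A) a b = fls_reflect (mat_fls A a b)"
  by (rule fls_eqI) (simp only: mat_fls_nth[OF is_Lmat_mat_neg[OF assms]] mat_fls_nth[OF assms]
      fls_reflect_nth, simp add: mat_neg_def)

lemma act_mat_mult:
  assumes A: "is_Lmat n A" and B: "is_Lmat n B" and u: "in_H n u"
  shows "act n (mat_mult n A B) u = act n A (act n B u)"
proof (rule in_H_eqI)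
  fix a
  have "vec_fls (act n (mat_mult n A B) u) a
      = (\<Sum>c<n. \<Sum>d<n. mat_fls A a d * (mat_fls B d c * vec_fls u c))"
    by (simp add: vec_fls_act[OF is_Lmat_mat_mult[OF A B] u] mat_fls_mat_mult[OF A B]
        sum_distrib_right mult.assoc)
  also have "\<dots> = vec_fls (act n A (act n B u)) a"
    by (subst sum.swap) (simp add: vec_fls_act[OF A in_H_act[OF B u]] vec_fls_act[OF B u]
        sum_distrib_left)
  finally show "vec_fls (act n (mat_mult n A B) u) a = vec_fls (act n A (act n B u)) a" .
qed (use assms in \<open>blast intro: in_H_act is_Lmat_mat_mult\<close>)+

lemma act_mat_one:
  assumes u: "in_H n u"
  shows "act n (mat_one n) u = u"
proof (rule in_H_eqI)
  fix a assume "a < n"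
  then have "(\<Sum>c<n. mat_fls (mat_one n) a c * vec_fls u c) = (\<Sum>c<n. if c = a then vec_fls u c else 0)"
    by (intro sum.cong) (auto simp: mat_fls_mat_one)
  then show "vec_fls (act n (mat_one n) u) a = vec_fls u a"
    using \<open>a < n\<close> by (simp add: vec_fls_act[OF is_Lmat_mat_one u])
qed (use u in \<open>simp_all add: in_H_act is_Lmat_mat_one\<close>)

lemma sum_apply: "(\<Sum>x\<in>S. f x) y = (\<Sum>x\<in>S. f x y)"
  by (induction S rule: infinite_finite_induct) auto

lemma sum_product_swap:
  fixes f g :: "_ \<Rightarrow> _ \<Rightarrow> 'a::semiring_0"
  shows "(\<Sum>a\<in>A. (\<Sum>b\<in>B. f a b) * (\<Sum>c\<in>C. g a c)) = (\<Sum>b\<in>B. \<Sum>c\<in>C. \<Sum>a\<in>A. f a b * g a c)"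
proof -
  have "(\<Sum>a\<in>A. (\<Sum>b\<in>B. f a b) * (\<Sum>c\<in>C. g a c)) = (\<Sum>a\<in>A. \<Sum>b\<in>B. \<Sum>c\<in>C. f a b * g a c)"
    by (simp add: sum_product)
  also have "\<dots> = (\<Sum>b\<in>B. \<Sum>a\<in>A. \<Sum>c\<in>C. f a b * g a c)"
    by (rule sum.swap)
  also have "\<dots> = (\<Sum>b\<in>B. \<Sum>c\<in>C. \<Sum>a\<in>A. f a b * g a c)"
    by (rule sum.cong[OF refl], rule sum.swap)
  finally show ?thesis .
qed

definition hscale :: "complex \<Rightarrow> hvec \<Rightarrow> hvec" where
  "hscale c u = (\<lambda>a k. c * u a k)"

lemma hscale_apply: "hscale c u a k = c * u a k"
  unfolding hscale_def ..

interpretation hv: vector_space hscale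
  by unfold_locales (auto simp: hscale_apply fun_eq_iff algebra_simps)

lemma lin_subspace_iff: "lin_subspace n X \<longleftrightarrow> X \<subseteq> {u. in_H n u} \<and> hv.subspace X"
  unfolding lin_subspace_def hv.subspace_def hscale_def zero_fun_def plus_fun_def by blast

lemma in_H_zero [simp]: "in_H n 0"
  unfolding in_H_def by auto

lemma in_H_add:
  assumes "in_H n u" "in_H n v" shows "in_H n (u + v)"
proof -
  obtain N M where "order_ge N u" "order_ge M v" using assms unfolding in_H_iff by blast
  then have "order_ge (min N M) (u + v)" unfolding order_ge_def by simp
  then show ?thesis using assms unfolding in_H_iff by auto
qed

lemma in_H_hscale: "in_H n u \<Longrightarrow> in_H n (hscale c u)"
  unfolding in_H_def hscale_apply by auto

lemma in_H_uminus: "in_H n u \<Longrightarrow> in_H n (- u)"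
  unfolding in_H_def by auto

lemma in_H_diff: "in_H n u \<Longrightarrow> in_H n v \<Longrightarrow> in_H n (u - v)"
  using in_H_add[of n u "- v"] in_H_uminus by simp

lemma in_H_sum: "(\<And>x. x \<in> S \<Longrightarrow> in_H n (f x)) \<Longrightarrow> in_H n (\<Sum>x\<in>S. f x)"
  by (induction S rule: infinite_finite_induct) (auto simp: in_H_add)

lemma vec_fls_add:
  assumes "in_H n u" "in_H n v" shows "vec_fls (u + v) a = vec_fls u a + vec_fls v a"
  by (rule fls_eqI) (simp add: vec_fls_nth[OF in_H_add[OF assms]] vec_fls_nth[OF assms(1)]
      vec_fls_nth[OF assms(2)])

lemma vec_fls_hscale:
  assumes "in_H n u" shows "vec_fls (hscale c u) a = fls_const c * vec_fls u a"
  by (rule fls_eqI) (simp add: vec_fls_nth[OF in_H_hscale[OF assms]] vec_fls_nth[OF assms] hscale_apply)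

lemma act_add:
  assumes A: "is_Lmat n A" and u: "in_H n u" and v: "in_H n v"
  shows "act n A (u + v) = act n A u + act n A v"
proof (rule in_H_eqI[of n])
  fix a
  show "vec_fls (act n A (u + v)) a = vec_fls (act n A u + act n A v) a"
    by (simp add: vec_fls_act[OF A] vec_fls_add[OF u v] vec_fls_add[OF in_H_act[OF A u] in_H_act[OF A v]] in_H_add assms distrib_left
        sum.distrib)
qed (simp_all add: in_H_act[OF A] in_H_add u v)

lemma act_hscale:
  assumes A: "is_Lmat n A" and u: "in_H n u"
  shows "act n A (hscale c u) = hscale c (act n A u)"
proof (rule in_H_eqI[of n])
  fix a
  show "vec_fls (act n A (hscale c u)) a = vec_fls (hscale c (act n A u)) a"
    by (simp add: vec_fls_act[OF A] vec_fls_hscale[OF u] vec_fls_hscale[OF in_H_act[OF A u]] in_H_hscale u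
        sum_distrib_left mult.left_commute)
qed (simp_all add: in_H_act[OF A] in_H_hscale u)

lemma act_zero: "act n A 0 = 0"
  unfolding act_def conv_def by (simp add: fun_eq_iff)

lemma order_ge_tmul: "order_ge N u \<Longrightarrow> order_ge (N + 1) (tmul u)"
  unfolding order_ge_def tmul_def by simp

lemma in_H_tmul:
  assumes "in_H n u" shows "in_H n (tmul u)"
proof -
  obtain N where "order_ge N u" using assms unfolding in_H_iff by blast
  then have "order_ge (N + 1) (tmul u)" by (rule order_ge_tmul)
  moreover have "\<forall>a k. n \<le> a \<longrightarrow> tmul u a k = 0" using assms by (simp add: in_H_def tmul_def)
  ultimately show ?thesis unfolding in_H_iff by blast
qed

lemma vec_fls_tmul:
  assumes "in_H n u" shows "vec_fls (tmul u) a = fls_X * vec_fls u a"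
  by (rule fls_eqI) (simp only: vec_fls_nth[OF in_H_tmul[OF assms]],
      simp add: vec_fls_nth[OF assms] tmul_def fls_X_times_conv_shift)

lemma act_tmul:
  assumes A: "is_Lmat n A" and u: "in_H n u"
  shows "act n A (tmul u) = tmul (act n A u)"
proof (rule in_H_eqI[of n])
  fix a
  show "vec_fls (act n A (tmul u)) a = vec_fls (tmul (act n A u)) a"
    by (simp add: vec_fls_act[OF A] vec_fls_tmul[OF u] vec_fls_tmul[OF in_H_act[OF A u]] in_H_tmul u
        sum_distrib_left mult.left_commute)
qed (simp_all add: in_H_act[OF A] in_H_tmul u)

section \<open>The residue pairing\<close>

definition fls_pairing :: "nat \<Rightarrow> hvec \<Rightarrow> hvec \<Rightarrow> complex fls" where
  "fls_pairing n u v = (\<Sum>a<n. vec_fls u a * fls_reflect (vec_fls v a))"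

lemma bform_eq_sum_interval:
  assumes "order_ge A u" and "order_ge B v"
  shows "bform n u v = \<i> * (\<Sum>a<n. \<Sum>p\<in>{A..-1-B}. u a p * ((-1) powi (-1 - p) * v a (-1 - p)))"
proof -
  have "(\<Sum>p | u a p \<noteq> 0 \<and> v a (-1 - p) \<noteq> 0. u a p * ((-1) powi (-1 - p) * v a (-1 - p)))
      = (\<Sum>p\<in>{A..-1-B}. u a p * ((-1) powi (-1 - p) * v a (-1 - p)))" for a
  proof (rule sum.mono_neutral_left)
    show "{p. u a p \<noteq> 0 \<and> v a (-1 - p) \<noteq> 0} \<subseteq> {A..-1-B}"
      using assms unfolding order_ge_def by (force simp: not_less[symmetric])
  qed auto
  then show ?thesis unfolding bform_def by simp
qed

lemma bform_eq_residue:
  assumes u: "in_H n u" and v: "in_H n v"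
  shows "bform n u v = \<i> * fls_pairing n u v $$ (-1)"
proof -
  obtain A B where A: "order_ge A u" and B: "order_ge B v" using assms unfolding in_H_iff by blast
  have "(vec_fls u a * fls_reflect (vec_fls v a)) $$ (-1)
      = (\<Sum>p\<in>{A..-1-B}. u a p * ((-1) powi (-1 - p) * v a (-1 - p)))" for a
    using A B by (subst fls_times_nth_interval[of A _ B])
      (simp_all add: vec_fls_nth[OF u] vec_fls_nth[OF v] order_ge_def)
  then show ?thesis
    unfolding bform_eq_sum_interval[OF A B] fls_pairing_def fls_nth_sum by simp
qed

lemma fls_pairing_swap: "fls_pairing n v u = fls_reflect (fls_pairing n u v)"
  unfolding fls_pairing_def by (simp add: fls_reflect_sum fls_reflect_times mult.commute)

lemma bform_swap:
  assumes "in_H n u" "in_H n v"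
  shows "bform n v u = - bform n u v"
  using assms by (simp add: bform_eq_residue fls_pairing_swap[of n v u])

lemma bform_self: "in_H n u \<Longrightarrow> bform n u u = 0"
  using bform_swap[of n u u] by simp

lemma bform_eq_0_if_order_ge:
  assumes "order_ge A u" "order_ge B v" "0 \<le> A + B"
  shows "bform n u v = 0"
  using assms by (simp add: bform_eq_sum_interval[OF assms(1,2)])

lemma bform_zero_left [simp]: "bform n 0 w = 0"
  unfolding bform_def by simp

lemma bform_zero_right [simp]: "bform n w 0 = 0"
  unfolding bform_def by simp

lemma bform_add_left:
  assumes "in_H n u" "in_H n v" "in_H n w"
  shows "bform n (u + v) w = bform n u w + bform n v w"
proof -
  have "fls_pairing n (u + v) w = fls_pairing n u w + fls_pairing n v w"
    unfolding fls_pairing_def using assms by (simp add: vec_fls_add distrib_right sum.distrib)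
  then show ?thesis using assms by (simp add: bform_eq_residue in_H_add distrib_left)
qed

lemma bform_hscale_left:
  assumes "in_H n u" "in_H n w"
  shows "bform n (hscale c u) w = c * bform n u w"
proof -
  have "fls_pairing n (hscale c u) w = fls_const c * fls_pairing n u w"
    unfolding fls_pairing_def using assms by (simp add: vec_fls_hscale sum_distrib_left mult.assoc)
  then show ?thesis using assms by (simp add: bform_eq_residue in_H_hscale)
qed

lemma bform_add_right:
  assumes "in_H n u" "in_H n v" "in_H n w"
  shows "bform n w (u + v) = bform n w u + bform n w v"
  using bform_swap[OF in_H_add[OF assms(1,2)] assms(3)] bform_add_left[OF assms]
    bform_swap[OF assms(1,3)] bform_swap[OF assms(2,3)] by simp

lemma bform_hscale_right:
  assumes "in_H n u" "in_H n w"
  shows "bform n w (hscale c u) = c * bform n w u"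
  using bform_swap[OF in_H_hscale[OF assms(1)] assms(2)] bform_hscale_left[OF assms]
    bform_swap[OF assms] by simp

lemma bform_diff_left:
  assumes "in_H n u" "in_H n v" "in_H n w"
  shows "bform n (u - v) w = bform n u w - bform n v w"
proof -
  have "bform n (u - v) w = bform n (u + hscale (-1) v) w" by simp
  also have "\<dots> = bform n u w + bform n (hscale (-1) v) w"
    by (rule bform_add_left[OF assms(1) in_H_hscale[OF assms(2)] assms(3)])
  also have "\<dots> = bform n u w - bform n v w"
    by (simp only: bform_hscale_left[OF assms(2,3)]) simp
  finally show ?thesis .
qed

lemma bform_diff_right:
  assumes "in_H n u" "in_H n v" "in_H n w"
  shows "bform n w (u - v) = bform n w u - bform n w v"
  using bform_swap[OF in_H_diff[OF assms(1,2)] assms(3)] bform_diff_left[OF assms]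
    bform_swap[OF assms(1,3)] bform_swap[OF assms(2,3)] by simp

lemma bform_lincomb_left:
  assumes w: "in_H n w" and v: "\<And>x. x \<in> S \<Longrightarrow> in_H n (v x)"
  shows "bform n (\<Sum>x\<in>S. hscale (c x) (v x)) w = (\<Sum>x\<in>S. c x * bform n (v x) w)"
  using v
proof (induction S rule: infinite_finite_induct)
  case (insert x S)
  have vx: "in_H n (v x)" and vS: "\<And>y. y \<in> S \<Longrightarrow> in_H n (v y)" using insert.prems by simp_all
  have cvx: "in_H n (hscale (c x) (v x))" using vx by (rule in_H_hscale)
  have cvS: "in_H n (\<Sum>y\<in>S. hscale (c y) (v y))" using vS by (simp add: in_H_hscale in_H_sum)
  have "bform n (\<Sum>y\<in>insert x S. hscale (c y) (v y)) w
      = bform n (hscale (c x) (v x)) w + bform n (\<Sum>y\<in>S. hscale (c y) (v y)) w"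
    unfolding sum.insert[OF insert.hyps] by (rule bform_add_left[OF cvx cvS w])
  also have "\<dots> = c x * bform n (v x) w + (\<Sum>y\<in>S. c y * bform n (v y) w)"
    by (simp only: bform_hscale_left[OF vx w] insert.IH[OF vS])
  finally show ?case by (simp only: sum.insert[OF insert.hyps])
qed simp_all

lemma bform_lincomb_right:
  assumes w: "in_H n w" and v: "\<And>x. x \<in> S \<Longrightarrow> in_H n (v x)"
  shows "bform n w (\<Sum>x\<in>S. hscale (c x) (v x)) = (\<Sum>x\<in>S. c x * bform n w (v x))"
proof -
  have "in_H n (\<Sum>x\<in>S. hscale (c x) (v x))" using v by (simp add: in_H_hscale in_H_sum)
  then have "bform n w (\<Sum>x\<in>S. hscale (c x) (v x)) = - (\<Sum>x\<in>S. c x * bform n (v x) w)"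
    using bform_swap[OF _ w] bform_lincomb_left[OF w v] by simp
  also have "\<dots> = (\<Sum>x\<in>S. c x * bform n w (v x))"
    using v by (simp add: sum_negf[symmetric] bform_swap[OF w])
  finally show ?thesis .
qed

definition twisted_inv :: "lmat \<Rightarrow> lmat" where
  "twisted_inv A = mat_neg (mat_tr A)"

lemma is_Lmat_twisted_inv: "is_Lmat n A \<Longrightarrow> is_Lmat n (twisted_inv A)"
  unfolding twisted_inv_def by (simp add: is_Lmat_mat_neg is_Lmat_mat_tr)

lemma mat_fls_twisted_inv:
  assumes "is_Lmat n A" shows "mat_fls (twisted_inv A) a b = fls_reflect (mat_fls A b a)"
  unfolding twisted_inv_def by (simp add: mat_fls_mat_neg[OF is_Lmat_mat_tr[OF assms]] mat_fls_mat_tr[OF assms])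

lemma mat_neg_mat_neg [simp]: "mat_neg (mat_neg A) = A"
  unfolding mat_neg_def by (simp add: fun_eq_iff mult.assoc[symmetric] power_int_mult_distrib[symmetric])

lemma mat_neg_mat_one [simp]: "mat_neg (mat_one n) = mat_one n"
  unfolding mat_neg_def mat_one_def by (simp add: fun_eq_iff)

lemma twisted_inv_twisted_inv [simp]: "twisted_inv (twisted_inv A) = A"
  unfolding twisted_inv_def mat_neg_def mat_tr_def
  by (simp add: fun_eq_iff mult.assoc[symmetric] power_int_mult_distrib[symmetric])

lemma twisted_inv_mat_one [simp]: "twisted_inv (mat_one n) = mat_one n"
  unfolding twisted_inv_def mat_neg_def mat_tr_def mat_one_def by (auto simp: fun_eq_iff)

lemma mat_eq_one_iff:
  assumes "is_Lmat n P"
  shows "P = mat_one n \<longleftrightarrow> (\<forall>a<n. \<forall>b<n. mat_fls P a b = (if a = b then 1 else 0))"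
  using is_Lmat_eqI[OF assms is_Lmat_mat_one] mat_fls_mat_one by auto

lemma mat_mult_assoc:
  assumes "is_Lmat n A" "is_Lmat n B" "is_Lmat n C"
  shows "mat_mult n (mat_mult n A B) C = mat_mult n A (mat_mult n B C)"
proof (rule is_Lmat_eqI[of n])
  fix a b
  show "mat_fls (mat_mult n (mat_mult n A B) C) a b = mat_fls (mat_mult n A (mat_mult n B C)) a b"
    using assms
    by (simp add: mat_fls_mat_mult is_Lmat_mat_mult sum_distrib_left sum_distrib_right mult.assoc)
      (rule sum.swap)
qed (use assms in \<open>simp_all add: is_Lmat_mat_mult\<close>)

lemma mat_mult_one_left: "is_Lmat n A \<Longrightarrow> mat_mult n (mat_one n) A = A"
  by (rule is_Lmat_eqI[of n]) (simp_all add: is_Lmat_mat_mult is_Lmat_mat_one mat_fls_mat_mult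
      mat_fls_mat_one if_distrib[of "\<lambda>x. x * _"] sum.delta cong: if_cong)

lemma mat_mult_one_right: "is_Lmat n A \<Longrightarrow> mat_mult n A (mat_one n) = A"
  by (rule is_Lmat_eqI[of n]) (simp_all add: is_Lmat_mat_mult is_Lmat_mat_one mat_fls_mat_mult
      mat_fls_mat_one if_distrib[of "\<lambda>x. _ * x"] sum.delta' cong: if_cong)

lemma mat_neg_mat_mult:
  assumes "is_Lmat n A" "is_Lmat n B"
  shows "mat_neg (mat_mult n A B) = mat_mult n (mat_neg A) (mat_neg B)"
  by (rule is_Lmat_eqI[of n]) (simp_all add: assms is_Lmat_mat_mult is_Lmat_mat_neg
      mat_fls_mat_neg[OF is_Lmat_mat_mult[OF assms]] mat_fls_mat_neg[OF assms(1)]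
      mat_fls_mat_neg[OF assms(2)] mat_fls_mat_mult fls_reflect_sum fls_reflect_times)

lemma twisted_inv_mat_mult:
  assumes "is_Lmat n A" "is_Lmat n B"
  shows "twisted_inv (mat_mult n A B) = mat_mult n (twisted_inv B) (twisted_inv A)"
  by (rule is_Lmat_eqI[of n]) (simp_all add: assms is_Lmat_mat_mult is_Lmat_twisted_inv
      mat_fls_twisted_inv[OF is_Lmat_mat_mult[OF assms]] mat_fls_twisted_inv[OF assms(1)]
      mat_fls_twisted_inv[OF assms(2)] mat_fls_mat_mult fls_reflect_sum fls_reflect_times mult_ac)

lemma GL2_iff:
  "A \<in> GL2 n \<longleftrightarrow> is_Lmat n A \<and> mat_mult n A (twisted_inv A) = mat_one n
                           \<and> mat_mult n (twisted_inv A) A = mat_one n"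
proof (cases "is_Lmat n A")
  case True
  have "mat_mult n (mat_neg A) (mat_tr A) = mat_neg (mat_mult n A (twisted_inv A))"
    unfolding mat_neg_mat_mult[OF True is_Lmat_twisted_inv[OF True]] by (simp add: twisted_inv_def)
  moreover have "mat_mult n (mat_tr A) (mat_neg A) = mat_neg (mat_mult n (twisted_inv A) A)"
    unfolding mat_neg_mat_mult[OF is_Lmat_twisted_inv[OF True] True] by (simp add: twisted_inv_def)
  moreover have "mat_neg P = mat_one n \<longleftrightarrow> P = mat_one n" for P
    by (metis mat_neg_mat_neg mat_neg_mat_one)
  ultimately show ?thesis
    unfolding GL2_def GL_def using True is_Lmat_twisted_inv[OF True] by auto
qed (simp add: GL2_def GL_def)

lemma GL2_is_Lmat: "A \<in> GL2 n \<Longrightarrow> is_Lmat n A"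
  unfolding GL2_iff by simp

lemma GL2_mat_one: "mat_one n \<in> GL2 n"
  unfolding GL2_iff by (simp add: is_Lmat_mat_one mat_mult_one_left)

lemma GL2_twisted_inv: "A \<in> GL2 n \<Longrightarrow> twisted_inv A \<in> GL2 n"
  unfolding GL2_iff by (simp add: is_Lmat_twisted_inv)

lemma GL2_mat_mult:
  assumes "A \<in> GL2 n" "B \<in> GL2 n"
  shows "mat_mult n A B \<in> GL2 n"
proof -
  have A: "is_Lmat n A" "is_Lmat n (twisted_inv A)" and B: "is_Lmat n B" "is_Lmat n (twisted_inv B)"
    using assms by (simp_all add: GL2_is_Lmat is_Lmat_twisted_inv)
  have "mat_mult n (mat_mult n A B) (mat_mult n (twisted_inv B) (twisted_inv A))
      = mat_mult n A (mat_mult n (mat_mult n B (twisted_inv B)) (twisted_inv A))"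
    using A B by (simp add: mat_mult_assoc is_Lmat_mat_mult)
  moreover have "mat_mult n (mat_mult n (twisted_inv B) (twisted_inv A)) (mat_mult n A B)
      = mat_mult n (twisted_inv B) (mat_mult n (mat_mult n (twisted_inv A) A) B)"
    using A B by (simp add: mat_mult_assoc is_Lmat_mat_mult)
  ultimately show ?thesis
    using assms A B unfolding GL2_iff
    by (simp add: twisted_inv_mat_mult is_Lmat_mat_mult mat_mult_one_left)
qed

lemma act_twisted_inv:
  assumes g: "g \<in> GL2 n" and v: "in_H n v"
  shows "act n g (act n (twisted_inv g) v) = v" and "act n (twisted_inv g) (act n g v) = v"
  using g v act_mat_mult[of n g "twisted_inv g" v] act_mat_mult[of n "twisted_inv g" g v]
  by (simp_all add: GL2_iff act_mat_one is_Lmat_twisted_inv)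

lemma GL2_iff_entries:
  "A \<in> GL2 n \<longleftrightarrow> is_Lmat n A
    \<and> (\<forall>a<n. \<forall>b<n. (\<Sum>c<n. fls_reflect (mat_fls A a c) * mat_fls A b c) = (if a = b then 1 else 0))
    \<and> (\<forall>a<n. \<forall>b<n. (\<Sum>c<n. mat_fls A c a * fls_reflect (mat_fls A c b)) = (if a = b then 1 else 0))"
proof (cases "is_Lmat n A")
  case True
  note entries = mat_fls_mat_mult[OF True is_Lmat_twisted_inv[OF True]]
    mat_fls_mat_mult[OF is_Lmat_twisted_inv[OF True] True] mat_fls_twisted_inv[OF True]
  have "mat_fls (mat_mult n A (twisted_inv A)) a b
      = fls_reflect (\<Sum>c<n. fls_reflect (mat_fls A a c) * mat_fls A b c)"
    and "mat_fls (mat_mult n (twisted_inv A) A) a b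
      = fls_reflect (\<Sum>c<n. mat_fls A c a * fls_reflect (mat_fls A c b))" for a b
    by (simp_all add: entries fls_reflect_sum fls_reflect_times mult.commute)
  moreover have "fls_reflect x = (if a = b then 1 else 0) \<longleftrightarrow> x = (if a = b then 1 else 0)"
    for x :: "complex fls" and a b :: nat
    by (cases "a = b") (metis fls_reflect_reflect fls_reflect_1, metis fls_reflect_reflect fls_reflect_0)
  ultimately show ?thesis
    unfolding GL2_iff using True
    by (simp add: mat_eq_one_iff is_Lmat_mat_mult is_Lmat_twisted_inv)
qed (simp add: GL2_iff)

lemma fls_pairing_act:
  assumes g: "A \<in> GL2 n" and u: "in_H n u" and v: "in_H n v"
  shows "fls_pairing n (act n A u) (act n A v) = fls_pairing n u v"
proof -
  have A: "is_Lmat n A" using GL2_is_Lmat[OF g] .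
  have orth: "(\<Sum>a<n. mat_fls A a b * fls_reflect (mat_fls A a c)) = (if b = c then 1 else 0)"
    if "b < n" "c < n" for b c
    using g that unfolding GL2_iff_entries by blast
  let ?u = "vec_fls u" and ?v = "\<lambda>c. fls_reflect (vec_fls v c)"
  have "fls_pairing n (act n A u) (act n A v)
      = (\<Sum>a<n. (\<Sum>b<n. mat_fls A a b * ?u b) * (\<Sum>c<n. fls_reflect (mat_fls A a c) * ?v c))"
    unfolding fls_pairing_def
    by (simp add: vec_fls_act[OF A u] vec_fls_act[OF A v] fls_reflect_sum fls_reflect_times)
  also have "\<dots> = (\<Sum>b<n. \<Sum>c<n. \<Sum>a<n. mat_fls A a b * ?u b * (fls_reflect (mat_fls A a c) * ?v c))"
    by (rule sum_product_swap)
  also have "\<dots> = (\<Sum>b<n. \<Sum>c<n. ?u b * ?v c * (\<Sum>a<n. mat_fls A a b * fls_reflect (mat_fls A a c)))"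
    by (simp add: sum_distrib_left mult_ac)
  also have "\<dots> = (\<Sum>b<n. \<Sum>c<n. if b = c then ?u b * ?v c else 0)"
    by (intro sum.cong refl) (simp add: orth)
  also have "\<dots> = fls_pairing n u v"
    unfolding fls_pairing_def by (simp add: sum.delta)
  finally show ?thesis .
qed

lemma bform_act:
  assumes g: "A \<in> GL2 n" and u: "in_H n u" and v: "in_H n v"
  shows "bform n (act n A u) (act n A v) = bform n u v"
  using fls_pairing_act[OF assms] bform_eq_residue[OF u v]
    bform_eq_residue[OF in_H_act[OF GL2_is_Lmat[OF g] u] in_H_act[OF GL2_is_Lmat[OF g] v]]
  by simp

section \<open>Lagrangian lattices\<close>

definition basis_vec :: "nat \<Rightarrow> int \<Rightarrow> hvec" where
  "basis_vec a j = (\<lambda>b k. if b = a \<and> k = j then 1 else 0)"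

definition lagrangian_lattice :: "nat \<Rightarrow> hvec set \<Rightarrow> bool" where
  "lagrangian_lattice n X \<longleftrightarrow> lin_subspace n X \<and> (\<forall>u\<in>X. tmul u \<in> X)
     \<and> (\<forall>u\<in>X. \<forall>v\<in>X. bform n u v = 0)
     \<and> (\<forall>v. in_H n v \<and> (\<forall>u\<in>X. bform n u v = 0) \<longrightarrow> v \<in> X)
     \<and> (\<exists>N. \<forall>u\<in>X. order_ge N u)"

lemma in_H_basis_vec: "a < n \<Longrightarrow> in_H n (basis_vec a j)"
  unfolding in_H_def basis_vec_def by (intro conjI exI[of _ j]) auto

lemma order_ge_basis_vec: "order_ge j (basis_vec a j)"
  unfolding order_ge_def basis_vec_def by simp

lemma bform_basis_vec_left:
  assumes a: "a < n" and v: "in_H n v"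
  shows "bform n (basis_vec a j) v = \<i> * ((-1) powi (-1 - j) * v a (-1 - j))"
proof -
  obtain B where B: "order_ge B v" using v unfolding in_H_iff by blast
  have "(\<Sum>p\<in>{j..-1-B}. basis_vec a j b p * ((-1) powi (-1 - p) * v b (-1 - p)))
      = (if b = a then (-1) powi (-1 - j) * v a (-1 - j) else 0)" for b
    using B by (cases "j \<le> -1 - B") (auto simp: basis_vec_def order_ge_def if_distrib[of "\<lambda>x. x * _"] cong: if_cong)
  then show ?thesis
    using a by (simp add: bform_eq_sum_interval[OF order_ge_basis_vec B])
qed

lemma Hsub_order_ge: "Hsub n (- (int n * M)) = {u. in_H n u \<and> order_ge M u}"
proof -
  have "- (int n * M) < vidx n a k \<longleftrightarrow> k < M" if a: "a < n" for a k
  proof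
    assume "k < M"
    then have "int n * (k + 1) \<le> int n * M" by (intro mult_left_mono) auto
    then show "- (int n * M) < vidx n a k" unfolding vidx_def by simp
  next
    assume h: "- (int n * M) < vidx n a k"
    show "k < M"
    proof (rule ccontr)
      assume "\<not> k < M"
      then have "int n * M \<le> int n * k" by (intro mult_left_mono) auto
      then show False using h a unfolding vidx_def by (simp only: distrib_left mult_1_right)
    qed
  qed
  then show ?thesis
    unfolding Hsub_def order_ge_def in_H_def by (auto simp: not_less) (meson not_le)
qed

lemma Hsub_0: "Hsub n 0 = {u. in_H n u \<and> order_ge 0 u}"
  using Hsub_order_ge[of n 0] by simp

lemma lin_subspace_Hsub: "lin_subspace n (Hsub n J)"
  unfolding lin_subspace_iff hv.subspace_def Hsub_def by (auto simp: in_H_add in_H_hscale hscale_apply)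

lemma lagrangian_latticeD:
  assumes "lagrangian_lattice n X"
  shows "hv.subspace X" and "u \<in> X \<Longrightarrow> in_H n u" and "u \<in> X \<Longrightarrow> tmul u \<in> X"
    and "u \<in> X \<Longrightarrow> v \<in> X \<Longrightarrow> bform n u v = 0"
    and "in_H n v \<Longrightarrow> \<forall>u\<in>X. bform n u v = 0 \<Longrightarrow> v \<in> X"
    and "\<exists>N. \<forall>u\<in>X. order_ge N u"
  using assms unfolding lagrangian_lattice_def lin_subspace_iff by blast+

lemma lagrangian_lattice_Hsub_0: "lagrangian_lattice n (Hsub n 0)"
  unfolding lagrangian_lattice_def
proof (intro conjI)
  show "lin_subspace n (Hsub n 0)" by (rule lin_subspace_Hsub)
  show "\<forall>u\<in>Hsub n 0. tmul u \<in> Hsub n 0"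
  proof
    fix u assume "u \<in> Hsub n 0"
    then have "in_H n u" "order_ge 0 u" unfolding Hsub_0 by auto
    then show "tmul u \<in> Hsub n 0"
      unfolding Hsub_0 using in_H_tmul order_ge_mono[OF order_ge_tmul[of 0 u]] by simp
  qed
  show "\<forall>u\<in>Hsub n 0. \<forall>v\<in>Hsub n 0. bform n u v = 0"
    unfolding Hsub_0 using bform_eq_0_if_order_ge[of 0 _ 0] by auto
  show "\<forall>v. in_H n v \<and> (\<forall>u\<in>Hsub n 0. bform n u v = 0) \<longrightarrow> v \<in> Hsub n 0"
  proof (intro allI impI)
    fix v assume v: "in_H n v \<and> (\<forall>u\<in>Hsub n 0. bform n u v = 0)"
    have "v a k = 0" if "k < 0" for a k
    proof (cases "a < n")
      case True
      have "basis_vec a (-1 - k) \<in> Hsub n 0"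
        unfolding Hsub_0 using in_H_basis_vec[OF True] order_ge_mono[OF order_ge_basis_vec] that
        by simp
      then show ?thesis using v bform_basis_vec_left[OF True, of v "-1 - k"] by simp
    qed (use v in \<open>simp add: in_H_def\<close>)
    then show "v \<in> Hsub n 0" unfolding Hsub_0 order_ge_def using v by blast
  qed
  show "\<exists>N. \<forall>u\<in>Hsub n 0. order_ge N u"
    unfolding Hsub_0 by blast
qed

lemma lagrangian_lattice_act:
  assumes X: "lagrangian_lattice n X" and g: "g \<in> GL2 n"
  shows "lagrangian_lattice n (act n g ` X)"
proof -
  have A: "is_Lmat n g" by (rule GL2_is_Lmat[OF g])
  note sub = lagrangian_latticeD(1)[OF X] and XH = lagrangian_latticeD(2)[OF X]
  show ?thesis unfolding lagrangian_lattice_def lin_subspace_iff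
  proof (intro conjI)
    show "act n g ` X \<subseteq> {u. in_H n u}" using in_H_act[OF A] XH by auto
    show "hv.subspace (act n g ` X)"
      unfolding hv.subspace_def
    proof (intro conjI ballI allI)
      show "0 \<in> act n g ` X" using hv.subspace_0[OF sub] act_zero by (metis image_eqI)
      fix x y assume "x \<in> act n g ` X" "y \<in> act n g ` X"
      then obtain u v where "u \<in> X" "v \<in> X" "x = act n g u" "y = act n g v" by blast
      then show "x + y \<in> act n g ` X"
        using act_add[OF A XH XH] hv.subspace_add[OF sub] by (metis image_eqI)
    next
      fix c x assume "x \<in> act n g ` X"
      then obtain u where "u \<in> X" "x = act n g u" by blast
      then show "hscale c x \<in> act n g ` X"
        using act_hscale[OF A XH] hv.subspace_scale[OF sub] by (metis image_eqI)
    qed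
    show "\<forall>x\<in>act n g ` X. tmul x \<in> act n g ` X"
    proof
      fix x assume "x \<in> act n g ` X"
      then obtain u where u: "u \<in> X" "x = act n g u" by blast
      then have "tmul x = act n g (tmul u)" using act_tmul[OF A XH] by simp
      with lagrangian_latticeD(3)[OF X u(1)] show "tmul x \<in> act n g ` X" by blast
    qed
    show "\<forall>x\<in>act n g ` X. \<forall>y\<in>act n g ` X. bform n x y = 0"
      using bform_act[OF g XH XH] lagrangian_latticeD(4)[OF X] by simp
    show "\<forall>v. in_H n v \<and> (\<forall>u\<in>act n g ` X. bform n u v = 0) \<longrightarrow> v \<in> act n g ` X"
    proof (intro allI impI)
      fix v assume v: "in_H n v \<and> (\<forall>u\<in>act n g ` X. bform n u v = 0)"
      define w where "w = act n (twisted_inv g) v"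
      have w: "in_H n w" unfolding w_def using in_H_act[OF is_Lmat_twisted_inv[OF A]] v by blast
      have vw: "v = act n g w" unfolding w_def using act_twisted_inv(1)[OF g] v by simp
      have "\<forall>u\<in>X. bform n u w = 0" using v bform_act[OF g XH w] vw by auto
      then show "v \<in> act n g ` X" using lagrangian_latticeD(5)[OF X w] vw by blast
    qed
    show "\<exists>N. \<forall>u\<in>act n g ` X. order_ge N u"
    proof -
      obtain N where N: "\<forall>u\<in>X. order_ge N u" using lagrangian_latticeD(6)[OF X] by blast
      obtain L where L: "\<And>a b k. k < L \<Longrightarrow> g a b k = 0" using is_Lmat_lower_bound[OF A] by blast
      have "\<forall>u\<in>act n g ` X. order_ge (L + N) u" using order_ge_act[of L g, OF L] N by blast
      then show ?thesis by blast
    qed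
  qed
qed

context vector_space
begin

lemma card_independent_le_dim:
  assumes "V \<subseteq> span T" "finite T" "independent B" "B \<subseteq> V"
  shows "finite B \<and> card B \<le> dim V"
proof -
  obtain B0 where B0: "B0 \<subseteq> V" "independent B0" "V \<subseteq> span B0" "card B0 = dim V"
    by (rule basis_exists)
  have "finite B0" using independent_span_bound[OF assms(2) B0(2)] B0(1) assms(1) by blast
  moreover have "B \<subseteq> span B0" using assms(4) B0(3) by blast
  ultimately show ?thesis using independent_span_bound[OF _ assms(3)] B0(4) by metis
qed

lemma sum_additive_on:
  assumes "subspace X" and "\<forall>u\<in>X. \<forall>v\<in>X. f (u + v) = f u + f v" and "f 0 = 0"
    and "\<forall>x\<in>S. g x \<in> X"
  shows "f (\<Sum>x\<in>S. g x) = (\<Sum>x\<in>S. f (g x))"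
  using assms(4)
proof (induction S rule: infinite_finite_induct)
  case (insert x S)
  then show ?case using assms(1,2) by (simp add: subspace_sum)
qed (simp_all add: assms(3))

lemma dim_image_less_if_factors:
  assumes X: "subspace X" and p: "Vector_Spaces.linear scale scale p"
    and f_add: "\<forall>u\<in>X. \<forall>v\<in>X. f (u + v) = f u + f v"
    and f_scale: "\<forall>c. \<forall>u\<in>X. f (scale c u) = scale c (f u)"
    and ker: "\<forall>z\<in>X. p z = 0 \<longrightarrow> f z = 0"
    and x: "x \<in> X" "f x = 0" "p x \<noteq> 0"
    and fin: "p ` X \<subseteq> span T" "finite T"
  shows "dim (f ` X) < dim (p ` X)"
proof -
  interpret p: Vector_Spaces.linear scale scale p by (rule p)
  have "{p x} \<subseteq> p ` X" "independent {p x}" using x by auto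
  then obtain B where B: "p x \<in> B" "B \<subseteq> p ` X" "independent B" "p ` X \<subseteq> span B"
    using maximal_independent_subset_extend[of "{p x}" "p ` X"] by auto
  have finB: "finite B" using card_independent_le_dim[OF fin(1,2) B(3,2)] by blast
  have cardB: "card B = dim (p ` X)" by (rule basis_card_eq_dim[OF B(2,4,3)])
  obtain w where w: "\<And>b. b \<in> B \<Longrightarrow> w b \<in> X \<and> p (w b) = b" "w (p x) = x"
  proof -
    have "\<forall>b\<in>B. \<exists>y\<in>X. p y = b" using B(2) by blast
    then obtain w where "\<forall>b\<in>B. w b \<in> X \<and> p (w b) = b" by metis
    then show ?thesis using that[of "w(p x := x)"] x by auto
  qed
  have f0: "f 0 = 0" using f_scale subspace_0[OF X] by (metis scale_zero_left)
  let ?T = "(\<lambda>b. f (w b)) ` (B - {p x})"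
  have "f ` X \<subseteq> span ?T"
  proof
    fix y assume "y \<in> f ` X"
    then obtain u where u: "u \<in> X" "y = f u" by blast
    have "p u \<in> span B" using u B(4) by blast
    then obtain c where c: "p u = (\<Sum>b\<in>B. scale (c b) b)" using span_finite[OF finB] by auto
    define s where "s = (\<Sum>b\<in>B. scale (c b) (w b))"
    have sX: "s \<in> X" unfolding s_def using w by (intro subspace_sum[OF X] subspace_scale[OF X]) auto
    have "p s = p u" using c w unfolding s_def by (simp add: p.sum p.scale)
    then have "f (u - s) = 0" using ker subspace_diff[OF X u(1) sX] by (simp add: p.diff)
    moreover have "f u = f (u - s) + f s"
      using f_add subspace_diff[OF X u(1) sX] sX by (metis diff_add_cancel)
    ultimately have "f u = f s" by simp
    also have "\<dots> = (\<Sum>b\<in>B. f (scale (c b) (w b)))"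
      unfolding s_def by (rule sum_additive_on[OF X f_add f0]) (use w subspace_scale[OF X] in blast)
    also have "\<dots> = (\<Sum>b\<in>B. scale (c b) (f (w b)))" using f_scale w by simp
    also have "\<dots> = (\<Sum>b\<in>B - {p x}. scale (c b) (f (w b)))"
      using w x(2) B(1) finB by (intro sum.mono_neutral_right) auto
    also have "\<dots> \<in> span ?T" by (intro span_sum span_scale span_base) auto
    finally show "y \<in> span ?T" using u by simp
  qed
  then have "dim (f ` X) \<le> card ?T" using dim_le_card finB by blast
  also have "\<dots> \<le> card (B - {p x})" using finB by (intro card_image_le) auto
  also have "\<dots> < card B" using finB B(1) by (intro card_Diff1_less)
  finally show ?thesis using cardB by simp
qed

end

definition polar_part :: "hvec \<Rightarrow> hvec" where
  "polar_part u = (\<lambda>a k. if k < 0 then u a k else 0)"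

lemma linear_polar_part: "Vector_Spaces.linear hscale hscale polar_part"
  by unfold_locales (auto simp: polar_part_def hscale_apply fun_eq_iff)

lemma polar_part_eq_0_iff: "polar_part u = 0 \<longleftrightarrow> order_ge 0 u"
  unfolding polar_part_def order_ge_def by (auto simp: fun_eq_iff)

lemma hvec_eq_sum_basis_vec:
  assumes "finite D" and "\<And>a k. (a, k) \<notin> D \<Longrightarrow> u a k = 0"
  shows "u = (\<Sum>(a, k)\<in>D. hscale (u a k) (basis_vec a k))"
proof (intro ext)
  fix a k
  have "(\<Sum>(b, j)\<in>D. hscale (u b j) (basis_vec b j)) a k = (\<Sum>bj\<in>D. if bj = (a, k) then u a k else 0)"
    unfolding sum_apply by (intro sum.cong) (auto simp: basis_vec_def hscale_apply split: if_splits)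
  also have "\<dots> = u a k" using assms by simp
  finally show "u a k = (\<Sum>(b, j)\<in>D. hscale (u b j) (basis_vec b j)) a k" ..
qed

lemma in_span_basis_vec:
  assumes "finite D" and "\<And>a k. (a, k) \<notin> D \<Longrightarrow> u a k = 0"
  shows "u \<in> hv.span ((\<lambda>(a, k). basis_vec a k) ` D)"
proof -
  have "(case x of (a, k) \<Rightarrow> hscale (u a k) (basis_vec a k)) \<in> hv.span ((\<lambda>(a, k). basis_vec a k) ` D)"
    if "x \<in> D" for x
    using that by (cases x) (auto intro!: hv.span_scale intro: hv.span_base)
  then have "(\<Sum>(a, k)\<in>D. hscale (u a k) (basis_vec a k)) \<in> hv.span ((\<lambda>(a, k). basis_vec a k) ` D)"
    by (rule hv.span_sum)
  from this hvec_eq_sum_basis_vec[OF assms, symmetric] show ?thesis by (rule back_subst)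
qed

lemma polar_part_in_span:
  assumes "in_H n u" and "order_ge (- N) u"
  shows "polar_part u \<in> hv.span ((\<lambda>(a, k). basis_vec a k) ` ({..<n} \<times> {-N..<0}))"
  by (rule in_span_basis_vec) (use assms in \<open>auto simp: polar_part_def in_H_def order_ge_def\<close>)

lemma exists_order_ge_m1:
  assumes "\<forall>u\<in>X. tmul u \<in> X"
  shows "u \<in> X \<Longrightarrow> order_ge (- int m) u \<Longrightarrow> polar_part u \<noteq> 0
    \<Longrightarrow> \<exists>x\<in>X. order_ge (-1) x \<and> polar_part x \<noteq> 0"
proof (induction m arbitrary: u)
  case 0
  then show ?case using polar_part_eq_0_iff by (metis minus_zero of_nat_0)
next
  case (Suc m)
  show ?case
  proof (cases "order_ge (-1) u")
    case False
    then obtain a k where ak: "k < -1" "u a k \<noteq> 0" unfolding order_ge_def by auto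
    have "order_ge (- int m) (tmul u)"
      using order_ge_tmul[OF Suc.prems(2)] by simp
    moreover have "polar_part (tmul u) \<noteq> 0"
      using ak unfolding polar_part_def tmul_def by (auto simp: fun_eq_iff intro!: exI[of _ "k + 1"])
    ultimately show ?thesis using Suc.IH assms Suc.prems(1) by blast
  qed (use Suc.prems in blast)
qed

lemma isotropic_partner:
  fixes c :: "nat \<Rightarrow> complex"
  assumes cc: "(\<Sum>a<n. c a * c a) = 0" and nz: "a0 < n" "c a0 \<noteq> 0"
  obtains c' where "(\<Sum>a<n. c a * c' a) = 1" "(\<Sum>a<n. c' a * c' a) = 0"
proof -
  define S where "S = (\<Sum>a<n. c a * cnj (c a))"
  have "S = of_real (\<Sum>a<n. (cmod (c a))\<^sup>2)"
    unfolding S_def by (simp add: complex_norm_square del: of_real_power)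
  moreover have "0 < (\<Sum>a<n. (cmod (c a))\<^sup>2)"
    using nz by (intro sum_pos2[of _ a0]) auto
  ultimately have S0: "S \<noteq> 0" by (simp del: of_real_sum of_real_power)
  define d where "d a = cnj (c a) / S" for a
  define q where "q = (\<Sum>a<n. d a * d a)"
  have cd: "(\<Sum>a<n. c a * d a) = 1"
    unfolding d_def using S0 by (simp add: sum_divide_distrib[symmetric] S_def)
  define c' where "c' a = d a - q / 2 * c a" for a
  have "(\<Sum>a<n. c a * c' a) = (\<Sum>a<n. c a * d a) - q / 2 * (\<Sum>a<n. c a * c a)"
    unfolding c'_def by (simp add: algebra_simps sum_subtractf sum_distrib_left)
  moreover have "(\<Sum>a<n. c' a * c' a)
      = (\<Sum>a<n. d a * d a) - q * (\<Sum>a<n. c a * d a) + (q / 2)\<^sup>2 * (\<Sum>a<n. c a * c a)"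
    unfolding c'_def
    by (simp add: algebra_simps sum_subtractf sum.distrib sum_distrib_left power2_eq_square)
  ultimately show ?thesis using that[of c'] cd cc unfolding q_def by simp
qed

text \<open>In matrix notation, with \<open>\<delta>\<close> the identity matrix, \<open>x y\<^sup>T\<close> the rank one matrices and
  \<open>x\<^sup>T x = y\<^sup>T y = 0\<close>, \<open>x\<^sup>T y = 1\<close>, this is the product of
  \<open>\<delta> + \<alpha> x y\<^sup>T + \<beta> y x\<^sup>T + \<sigma> y y\<^sup>T\<close> with the transpose of the matrix with primed coefficients.\<close>

lemma rank_two_mult_transpose:
  fixes x y :: "nat \<Rightarrow> 'a::comm_ring_1"
  assumes xx: "(\<Sum>e<n. x e * x e) = 0" and yy: "(\<Sum>e<n. y e * y e) = 0"
    and xy: "(\<Sum>e<n. x e * y e) = 1" and ab: "a < n" "b < n"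
  shows "(\<Sum>e<n. ((if a = e then 1 else 0) + \<alpha> * x a * y e + \<beta> * y a * x e + \<sigma> * y a * y e)
                * ((if b = e then 1 else 0) + \<alpha>' * x b * y e + \<beta>' * y b * x e + \<sigma>' * y b * y e))
    = (if a = b then 1 else 0) + (\<alpha> + \<beta>' + \<alpha> * \<beta>') * x a * y b + (\<beta> + \<alpha>' + \<beta> * \<alpha>') * y a * x b
      + (\<sigma> + \<sigma>' + \<sigma> * \<beta>' + \<beta> * \<sigma>') * y a * y b" (is "?lhs = _")
proof -
  define A where "A e = \<alpha> * x a * y e + \<beta> * y a * x e + \<sigma> * y a * y e" for e
  define B where "B e = \<alpha>' * x b * y e + \<beta>' * y b * x e + \<sigma>' * y b * y e" for e
  let ?d = "\<lambda>a e. if a = e then 1 else (0::'a)"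
  have "A e * B e = (\<beta> * \<beta>' * y a * y b) * (x e * x e)
      + (\<alpha> * \<alpha>' * x a * x b + \<alpha> * \<sigma>' * x a * y b + \<sigma> * \<alpha>' * y a * x b + \<sigma> * \<sigma>' * y a * y b) * (y e * y e)
      + (\<alpha> * \<beta>' * x a * y b + \<beta> * \<alpha>' * y a * x b + (\<beta> * \<sigma>' + \<sigma> * \<beta>') * y a * y b) * (x e * y e)" for e
    unfolding A_def B_def by (simp add: algebra_simps)
  then have AB: "(\<Sum>e<n. A e * B e)
      = \<alpha> * \<beta>' * x a * y b + \<beta> * \<alpha>' * y a * x b + (\<beta> * \<sigma>' + \<sigma> * \<beta>') * y a * y b"
    by (simp add: sum.distrib sum_distrib_left[symmetric] xx yy xy)
  have "?lhs = (\<Sum>e<n. (?d a e + A e) * (?d b e + B e))"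
    unfolding A_def B_def by (simp add: add.assoc)
  also have "\<dots> = (\<Sum>e<n. ?d a e * ?d b e) + (\<Sum>e<n. ?d a e * B e) + (\<Sum>e<n. A e * ?d b e)
      + (\<Sum>e<n. A e * B e)"
    by (simp add: algebra_simps sum.distrib)
  also have "\<dots> = ?d a b + B a + A b + (\<Sum>e<n. A e * B e)"
    using ab by (simp add: if_distrib[of "\<lambda>z. z * _"] if_distrib[of "\<lambda>z. _ * z"] cong: if_cong)
  finally show ?thesis
    unfolding AB by (simp add: A_def B_def algebra_simps)
qed

lemma fls_X_times_X_inv: "fls_X * fls_X_inv = (1::'a::field fls)"
  by (simp add: fls_inverse_X[symmetric])

text \<open>The matrix \<open>1 + (t - 1) x y\<^sup>T - (t\<^sup>-\<^sup>1 + 1) y x\<^sup>T + s y y\<^sup>T\<close>.\<close>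

definition hyperbolic_mat :: "nat \<Rightarrow> (nat \<Rightarrow> complex) \<Rightarrow> (nat \<Rightarrow> complex) \<Rightarrow> complex \<Rightarrow> lmat" where
  "hyperbolic_mat n x y s = (\<lambda>a b j. if a < n \<and> b < n then
    (if j = 0 then (if a = b then 1 else 0) - x a * y b - y a * x b + s * y a * y b
     else if j = 1 then x a * y b else if j = -1 then - (y a * x b) else 0) else 0)"

lemma is_Lmat_hyperbolic_mat: "is_Lmat n (hyperbolic_mat n x y s)"
proof -
  have "{j. hyperbolic_mat n x y s a b j \<noteq> 0} \<subseteq> {-1, 0, 1}" for a b
    by (auto simp: hyperbolic_mat_def split: if_splits)
  then have "finite {j. hyperbolic_mat n x y s a b j \<noteq> 0}" for a b
    by (rule finite_subset) simp
  moreover have "hyperbolic_mat n x y s a b j = 0" if "n \<le> a \<or> n \<le> b" for a b j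
    using that by (auto simp: hyperbolic_mat_def)
  ultimately show ?thesis unfolding is_Lmat_def by blast
qed

lemma mat_fls_hyperbolic_mat:
  assumes "a < n" "b < n"
  shows "mat_fls (hyperbolic_mat n x y s) a b = (if a = b then 1 else 0)
    + (fls_X - 1) * fls_const (x a) * fls_const (y b) + (- fls_X_inv - 1) * fls_const (y a) * fls_const (x b)
    + fls_const s * fls_const (y a) * fls_const (y b)"
  by (rule fls_eqI) (simp only: mat_fls_nth[OF is_Lmat_hyperbolic_mat],
      use assms in \<open>auto simp: hyperbolic_mat_def algebra_simps\<close>)

lemma GL2_hyperbolic_mat:
  assumes xy: "(\<Sum>a<n. x a * y a) = 1" and yy: "(\<Sum>a<n. y a * y a) = 0"
    and xx: "(\<Sum>a<n. x a * x a) = 0"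
  shows "hyperbolic_mat n x y s \<in> GL2 n"
proof -
  define \<alpha> where "\<alpha> = (fls_X - 1 :: complex fls)"
  define \<beta> where "\<beta> = (- fls_X_inv - 1 :: complex fls)"
  define \<sigma> where "\<sigma> = fls_const s"
  define X where "X e = fls_const (x e)" for e
  define Y where "Y e = fls_const (y e)" for e
  have fls_const_sum: "fls_const (\<Sum>e<n. f e) = (\<Sum>e<n. fls_const (f e))" for f
    by (rule fls_eqI) (simp add: fls_nth_sum)
  have XX: "(\<Sum>e<n. X e * X e) = 0" and YY: "(\<Sum>e<n. Y e * Y e) = 0" and XY: "(\<Sum>e<n. X e * Y e) = 1"
    using arg_cong[OF xx, of fls_const] arg_cong[OF yy, of fls_const] arg_cong[OF xy, of fls_const]
    unfolding X_def Y_def fls_const_sum by simp_all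
  let ?H = "hyperbolic_mat n x y s"
  have H: "mat_fls ?H a b = (if a = b then 1 else 0) + \<alpha> * X a * Y b + \<beta> * Y a * X b + \<sigma> * Y a * Y b"
    if "a < n" "b < n" for a b
    unfolding mat_fls_hyperbolic_mat[OF that] \<alpha>_def \<beta>_def \<sigma>_def X_def Y_def ..
  have H': "mat_fls ?H b a = (if a = b then 1 else 0) + \<beta> * X a * Y b + \<alpha> * Y a * X b + \<sigma> * Y a * Y b"
    if "a < n" "b < n" for a b
    unfolding H[OF that(2,1)] by (simp add: algebra_simps)
  let ?r\<alpha> = "fls_reflect \<alpha>" and ?r\<beta> = "fls_reflect \<beta>"
  have rH: "fls_reflect (mat_fls ?H a b)
      = (if a = b then 1 else 0) + ?r\<alpha> * X a * Y b + ?r\<beta> * Y a * X b + \<sigma> * Y a * Y b"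
    if "a < n" "b < n" for a b
    unfolding H[OF that] by (simp add: fls_reflect_plus fls_reflect_times \<sigma>_def X_def Y_def)
  have rH': "fls_reflect (mat_fls ?H b a)
      = (if a = b then 1 else 0) + ?r\<beta> * X a * Y b + ?r\<alpha> * Y a * X b + \<sigma> * Y a * Y b"
    if "a < n" "b < n" for a b
    unfolding rH[OF that(2,1)] by (simp add: algebra_simps)
  have X_inv: "fls_X * fls_X_inv = (1::complex fls)" by (rule fls_X_times_X_inv)
  have r\<alpha>: "?r\<alpha> = - fls_X - 1" and r\<beta>: "?r\<beta> = fls_X_inv - 1"
    unfolding \<alpha>_def \<beta>_def by (simp_all add: fls_reflect_minus fls_reflect_uminus fls_reflect_X fls_reflect_X_inv)
  have coeffs: "?r\<alpha> + \<beta> + ?r\<alpha> * \<beta> = 0" "?r\<beta> + \<alpha> + ?r\<beta> * \<alpha> = 0"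
    "\<beta> + ?r\<alpha> + \<beta> * ?r\<alpha> = 0" "\<alpha> + ?r\<beta> + \<alpha> * ?r\<beta> = 0"
    "\<sigma> + \<sigma> + \<sigma> * \<beta> + ?r\<beta> * \<sigma> = 0" "\<sigma> + \<sigma> + \<sigma> * ?r\<alpha> + \<alpha> * \<sigma> = 0"
    unfolding r\<alpha> r\<beta> unfolding \<alpha>_def \<beta>_def using X_inv by (simp_all add: algebra_simps)
  show ?thesis
    unfolding GL2_iff_entries
  proof (intro conjI allI impI is_Lmat_hyperbolic_mat)
    fix a b assume ab: "a < n" "b < n"
    have "(\<Sum>c<n. fls_reflect (mat_fls ?H a c) * mat_fls ?H b c)
      = (\<Sum>c<n. ((if a = c then 1 else 0) + ?r\<alpha> * X a * Y c + ?r\<beta> * Y a * X c + \<sigma> * Y a * Y c)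
               * ((if b = c then 1 else 0) + \<alpha> * X b * Y c + \<beta> * Y b * X c + \<sigma> * Y b * Y c))"
      by (intro sum.cong refl) (simp add: rH[OF ab(1)] H[OF ab(2)])
    also have "\<dots> = (if a = b then 1 else 0)"
      unfolding rank_two_mult_transpose[OF XX YY XY ab] coeffs by simp
    finally show "(\<Sum>c<n. fls_reflect (mat_fls ?H a c) * mat_fls ?H b c) = (if a = b then 1 else 0)" .
  next
    fix a b assume ab: "a < n" "b < n"
    have "(\<Sum>c<n. mat_fls ?H c a * fls_reflect (mat_fls ?H c b))
      = (\<Sum>c<n. ((if a = c then 1 else 0) + \<beta> * X a * Y c + \<alpha> * Y a * X c + \<sigma> * Y a * Y c)
               * ((if b = c then 1 else 0) + ?r\<beta> * X b * Y c + ?r\<alpha> * Y b * X c + \<sigma> * Y b * Y c))"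
      by (intro sum.cong refl) (simp add: H'[OF ab(1)] rH'[OF ab(2)])
    also have "\<dots> = (if a = b then 1 else 0)"
      unfolding rank_two_mult_transpose[OF XX YY XY ab] coeffs by simp
    finally show "(\<Sum>c<n. mat_fls ?H c a * fls_reflect (mat_fls ?H c b)) = (if a = b then 1 else 0)" .
  qed
qed

lemma conv_hyperbolic_mat:
  assumes "order_ge B v"
  shows "conv (hyperbolic_mat n x y s a e) (v e) j
    = (\<Sum>i\<in>{-1..j-B}. hyperbolic_mat n x y s a e i * v e (j - i))"
  by (rule conv_eq_sum_interval) (use assms in \<open>auto simp: hyperbolic_mat_def order_ge_def\<close>)

lemma order_ge_act_hyperbolic_mat:
  assumes z: "order_ge 0 z" and xz: "(\<Sum>e<n. x e * z e 0) = 0"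
  shows "order_ge 0 (act n (hyperbolic_mat n x y s) z)"
  unfolding order_ge_def
proof (intro allI impI)
  fix a :: nat and j :: int assume j: "j < 0"
  have "act n (hyperbolic_mat n x y s) z a j
      = (\<Sum>e<n. \<Sum>i\<in>{-1..j}. hyperbolic_mat n x y s a e i * z e (j - i))"
    unfolding act_def using conv_hyperbolic_mat[OF z] by simp
  also have "\<dots> = 0"
  proof (cases "j = -1")
    case True
    then have "(\<Sum>e<n. \<Sum>i\<in>{-1..j}. hyperbolic_mat n x y s a e i * z e (j - i))
        = (if a < n then - y a * (\<Sum>e<n. x e * z e 0) else 0)"
      by (auto simp: hyperbolic_mat_def sum_distrib_left intro!: sum.cong)
    then show ?thesis using xz by simp
  qed (use j in simp)
  finally show "act n (hyperbolic_mat n x y s) z a j = 0" .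
qed

lemma order_ge_act_hyperbolic_mat_self:
  assumes u: "order_ge (-1) u" and x: "\<forall>e<n. x e = u e (-1)" and s: "s = (\<Sum>e<n. x e * u e 0)"
    and xx: "(\<Sum>e<n. x e * x e) = 0" and xy: "(\<Sum>e<n. x e * y e) = 1"
  shows "order_ge 0 (act n (hyperbolic_mat n x y s) u)"
  unfolding order_ge_def
proof (intro allI impI)
  fix a :: nat and j :: int assume j: "j < 0"
  let ?H = "hyperbolic_mat n x y s"
  have "act n ?H u a j = (\<Sum>e<n. \<Sum>i\<in>{-1..j+1}. ?H a e i * u e (j - i))"
    unfolding act_def using conv_hyperbolic_mat[OF u] by simp
  also have "\<dots> = 0"
  proof -
    consider "j = -1" | "j = -2" | "j < -2" using j by linarith
    then show ?thesis
    proof cases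
      case 1
      then have "{-1..j+1} = {-1, 0}" by auto
      moreover have "(\<Sum>e<n. ?H a e (-1) * u e 0 + ?H a e 0 * u e (-1))
          = (if a < n then - y a * s + x a - x a * (\<Sum>e<n. y e * x e) - y a * (\<Sum>e<n. x e * x e)
              + s * y a * (\<Sum>e<n. y e * x e) else 0)"
      proof (cases "a < n")
        case True
        then have "(\<Sum>e<n. ?H a e (-1) * u e 0 + ?H a e 0 * u e (-1))
            = (\<Sum>e<n. - y a * (x e * u e 0) + ((if a = e then x e else 0) - x a * (y e * x e)
                - y a * (x e * x e) + s * y a * (y e * x e)))"
          using x by (intro sum.cong refl) (auto simp: hyperbolic_mat_def algebra_simps)
        then show ?thesis
          using True by (simp add: sum.distrib sum_subtractf sum_distrib_left s sum_negf)
      qed (simp add: hyperbolic_mat_def)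
      ultimately show ?thesis using 1 xx xy by (simp add: mult.commute)
    next
      case 2
      then have "(\<Sum>e<n. \<Sum>i\<in>{-1..j+1}. ?H a e i * u e (j - i))
          = (if a < n then - y a * (\<Sum>e<n. x e * x e) else 0)"
        using x by (auto simp: hyperbolic_mat_def sum_distrib_left intro!: sum.cong)
      then show ?thesis using xx by simp
    qed simp
  qed
  finally show "act n ?H u a j = 0" .
qed

section \<open>Lagrangian lattices form one orbit\<close>

lemma lagrangian_lattice_eq_Hsub_0:
  assumes X: "lagrangian_lattice n X" and "\<forall>u\<in>X. polar_part u = 0"
  shows "X = Hsub n 0"
proof
  have X0: "order_ge 0 u" if "u \<in> X" for u
    using assms(2) that by (simp add: polar_part_eq_0_iff)
  show "X \<subseteq> Hsub n 0"
    unfolding Hsub_0 using X0 lagrangian_latticeD(2)[OF X] by blast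
  show "Hsub n 0 \<subseteq> X"
  proof
    fix v assume "v \<in> Hsub n 0"
    then have v: "in_H n v" "order_ge 0 v" unfolding Hsub_0 by auto
    have "bform n u v = 0" if "u \<in> X" for u
      using bform_eq_0_if_order_ge[OF X0[OF that] v(2)] by simp
    then show "v \<in> X" using lagrangian_latticeD(5)[OF X v(1)] by blast
  qed
qed

text \<open>If \<open>x\<close> has polar part \<open>c t\<^sup>-\<^sup>1\<close>, then \<open>c\<close> is isotropic because
  \<open>\<langle>x, t x\<rangle> = 0\<close>, and the hyperbolic matrix built from \<open>c\<close> clears the polar part of \<open>x\<close> while
  keeping that of every element already in \<open>H\<^sub>0\<close> zero.\<close>

lemma lagrangian_lattice_reduce:
  assumes X: "lagrangian_lattice n X" and nz: "\<exists>u\<in>X. polar_part u \<noteq> 0"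
  obtains g where "g \<in> GL2 n" "hv.dim (polar_part ` act n g ` X) < hv.dim (polar_part ` X)"
proof -
  note sub = lagrangian_latticeD(1)[OF X] and XH = lagrangian_latticeD(2)[OF X]
    and tm = lagrangian_latticeD(3)[OF X] and iso = lagrangian_latticeD(4)[OF X]
  obtain N :: nat where N: "\<forall>u\<in>X. order_ge (- int N) u"
  proof -
    obtain N0 where "\<forall>u\<in>X. order_ge N0 u" using lagrangian_latticeD(6)[OF X] by blast
    moreover have "- int (nat (- N0)) \<le> N0" by simp
    ultimately show ?thesis using that[of "nat (- N0)"] order_ge_mono by blast
  qed
  obtain x where x: "x \<in> X" "order_ge (-1) x" "polar_part x \<noteq> 0"
    using exists_order_ge_m1[of X] tm nz N by blast
  define c where "c e = x e (-1)" for e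
  define s where "s = (\<Sum>e<n. c e * x e 0)"
  obtain a0 where a0: "a0 < n" "c a0 \<noteq> 0"
  proof -
    obtain a k where ak: "k < 0" "x a k \<noteq> 0" using x(3) unfolding polar_part_eq_0_iff order_ge_def by auto
    have "\<not> k < -1" using ak(2) x(2) unfolding order_ge_def by blast
    then have "k = -1" using ak(1) by linarith
    moreover have "a < n" using ak(2) XH[OF x(1)] unfolding in_H_def by (meson not_le)
    ultimately show ?thesis using that ak(2) unfolding c_def by blast
  qed
  have "bform n x (tmul x) = \<i> * (\<Sum>a<n. c a * c a)"
    using order_ge_tmul[OF x(2)] by (simp add: bform_eq_sum_interval[OF x(2)] c_def tmul_def)
  then have cc: "(\<Sum>a<n. c a * c a) = 0" using iso[OF x(1) tm[OF x(1)]] by simp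
  obtain c' where c': "(\<Sum>a<n. c a * c' a) = 1" "(\<Sum>a<n. c' a * c' a) = 0"
    using isotropic_partner[OF cc a0] by blast
  define g where "g = hyperbolic_mat n c c' s"
  have g: "g \<in> GL2 n" unfolding g_def by (rule GL2_hyperbolic_mat[OF c' cc])
  have gL: "is_Lmat n g" by (rule GL2_is_Lmat[OF g])
  interpret polar: Vector_Spaces.linear hscale hscale polar_part by (rule linear_polar_part)
  have "hv.dim ((\<lambda>u. polar_part (act n g u)) ` X) < hv.dim (polar_part ` X)"
  proof (rule hv.dim_image_less_if_factors[OF sub linear_polar_part])
    show "\<forall>u\<in>X. \<forall>v\<in>X. polar_part (act n g (u + v)) = polar_part (act n g u) + polar_part (act n g v)"
      using act_add[OF gL XH XH] by (simp add: polar.add)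
    show "\<forall>d. \<forall>u\<in>X. polar_part (act n g (hscale d u)) = hscale d (polar_part (act n g u))"
      using act_hscale[OF gL XH] by (simp add: polar.scale)
    show "\<forall>z\<in>X. polar_part z = 0 \<longrightarrow> polar_part (act n g z) = 0"
    proof (intro ballI impI)
      fix z assume z: "z \<in> X" "polar_part z = 0"
      then have z0: "order_ge 0 z" by (simp add: polar_part_eq_0_iff)
      have "bform n z x = \<i> * - (\<Sum>e<n. c e * z e 0)"
        by (simp add: bform_eq_sum_interval[OF z0 x(2)] c_def sum_negf mult.commute)
      then have "(\<Sum>e<n. c e * z e 0) = 0" using iso[OF z(1) x(1)] by simp
      then show "polar_part (act n g z) = 0"
        unfolding g_def polar_part_eq_0_iff by (rule order_ge_act_hyperbolic_mat[OF z0])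
    qed
    show "polar_part (act n g x) = 0"
      unfolding g_def polar_part_eq_0_iff
      by (rule order_ge_act_hyperbolic_mat_self[OF x(2) _ s_def cc c'(1)]) (simp add: c_def)
    show "polar_part ` X \<subseteq> hv.span ((\<lambda>(a, k). basis_vec a k) ` ({..<n} \<times> {- int N..<0}))"
      using polar_part_in_span XH N by blast
  qed (use x in auto)
  then show ?thesis using that g by (simp add: image_image)
qed

theorem lagrangian_lattice_orbit:
  "lagrangian_lattice n X \<Longrightarrow> \<exists>g\<in>GL2 n. X = act n g ` Hsub n 0"
proof (induction "hv.dim (polar_part ` X)" arbitrary: X rule: less_induct)
  case less
  show ?case
  proof (cases "\<exists>u\<in>X. polar_part u \<noteq> 0")
    case True
    obtain k where k: "k \<in> GL2 n" "hv.dim (polar_part ` act n k ` X) < hv.dim (polar_part ` X)"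
      using lagrangian_lattice_reduce[OF less.prems True] by blast
    obtain g where g: "g \<in> GL2 n" "act n k ` X = act n g ` Hsub n 0"
      using less.hyps[OF k(2) lagrangian_lattice_act[OF less.prems k(1)]] by blast
    have "X = act n (twisted_inv k) ` act n k ` X"
      using act_twisted_inv(2)[OF k(1)] lagrangian_latticeD(2)[OF less.prems]
      by (force simp: image_image)
    also have "\<dots> = act n (mat_mult n (twisted_inv k) g) ` Hsub n 0"
      unfolding g(2) image_image Hsub_0
      using act_mat_mult[OF is_Lmat_twisted_inv[OF GL2_is_Lmat[OF k(1)]] GL2_is_Lmat[OF g(1)]]
      by (intro image_cong) auto
    finally show ?thesis using GL2_mat_mult[OF GL2_twisted_inv[OF k(1)] g(1)] by blast
  next
    case False
    then have "X = Hsub n 0" using lagrangian_lattice_eq_Hsub_0[OF less.prems] by blast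
    moreover have "act n (mat_one n) ` Hsub n 0 = Hsub n 0"
      unfolding Hsub_0 using act_mat_one by (simp add: image_cong[OF refl, of _ _ id])
    ultimately show ?thesis using GL2_mat_one by blast
  qed
qed

text \<open>Vectors supported in the degrees \<open>-N \<le> k < N\<close>; the form pairs degree \<open>k\<close> with degree
  \<open>-1 - k\<close>, so it is nondegenerate on this \<open>2nN\<close>-dimensional space.\<close>

definition box :: "nat \<Rightarrow> nat \<Rightarrow> hvec set" where
  "box n N = {u. in_H n u \<and> order_ge (- int N) u \<and> (\<forall>a k. int N \<le> k \<longrightarrow> u a k = 0)}"

definition box_basis :: "nat \<Rightarrow> nat \<Rightarrow> hvec set" where
  "box_basis n N = (\<lambda>(a, k). basis_vec a k) ` ({..<n} \<times> {- int N..<int N})"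

lemma subspace_box: "hv.subspace (box n N)"
  unfolding hv.subspace_def box_def order_ge_def by (auto simp: in_H_add in_H_hscale hscale_apply)

lemma box_in_H: "u \<in> box n N \<Longrightarrow> in_H n u"
  unfolding box_def by simp

lemma box_basis_subset: "box_basis n N \<subseteq> box n N"
  unfolding box_basis_def box_def using in_H_basis_vec by (auto simp: basis_vec_def order_ge_def)

lemma box_subset_span: "box n N \<subseteq> hv.span (box_basis n N)"
  unfolding box_basis_def
proof (intro subsetI in_span_basis_vec)
  fix u a k assume "u \<in> box n N" "(a, k) \<notin> {..<n} \<times> {- int N..<int N}"
  then show "u a k = 0" unfolding box_def in_H_def order_ge_def by (auto simp: not_less)
qed simp

lemma basis_vec_eq_iff: "basis_vec a k = basis_vec a' k' \<longleftrightarrow> a = a' \<and> k = k'"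
  unfolding basis_vec_def by (metis zero_neq_one)

lemma finite_box_basis: "finite (box_basis n N)"
  unfolding box_basis_def by simp

lemma card_box_basis: "card (box_basis n N) = 2 * n * N"
proof -
  have "inj_on (\<lambda>(a, k). basis_vec a k) ({..<n} \<times> {- int N..<int N})"
    by (auto simp: inj_on_def basis_vec_eq_iff)
  then have "card (box_basis n N) = card ({..<n} \<times> {- int N..<int N})"
    unfolding box_basis_def by (rule card_image)
  then show ?thesis by (simp add: card_cartesian_product nat_mult_distrib)
qed

lemma independent_box_basis: "hv.independent (box_basis n N)"
proof (rule hv.independent_if_scalars_zero[OF finite_box_basis])
  fix c v assume sum0: "(\<Sum>w\<in>box_basis n N. hscale (c w) w) = 0" and v: "v \<in> box_basis n N"
  obtain a k where ak: "v = basis_vec a k" using v unfolding box_basis_def by auto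
  have "(\<Sum>w\<in>box_basis n N. hscale (c w) w) a k = (\<Sum>w\<in>box_basis n N. if w = v then c w else 0)"
    unfolding sum_apply
  proof (intro sum.cong refl)
    fix w assume "w \<in> box_basis n N"
    then obtain a' k' where "w = basis_vec a' k'" unfolding box_basis_def by auto
    then show "hscale (c w) w a k = (if w = v then c w else 0)"
      using ak by (auto simp: basis_vec_eq_iff) (auto simp: basis_vec_def hscale_apply)
  qed
  then show "c v = 0" using sum0 v finite_box_basis by simp
qed

lemma box_nondegenerate:
  assumes r: "r \<in> box n N" "r \<noteq> 0"
  obtains z where "z \<in> box_basis n N" "bform n r z \<noteq> 0"
proof -
  obtain a k where ak: "r a k \<noteq> 0" using r(2) by (auto simp: fun_eq_iff)
  have rH: "in_H n r" using r(1) by (rule box_in_H)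
  have a: "a < n" using ak rH unfolding in_H_def by (meson not_le)
  have "\<not> k < - int N" "\<not> int N \<le> k" using ak r(1) unfolding box_def order_ge_def by blast+
  then have "- int N \<le> k" "k < int N" by linarith+
  then have z: "basis_vec a (-1 - k) \<in> box_basis n N"
    unfolding box_basis_def using a by (auto intro!: image_eqI[of _ _ "(a, -1 - k)"])
  have "bform n r (basis_vec a (-1 - k)) = - (\<i> * ((-1) powi k * r a k))"
    using bform_swap[OF in_H_basis_vec[OF a] rH] bform_basis_vec_left[OF a rH, of "-1 - k"] by simp
  then have "bform n r (basis_vec a (-1 - k)) \<noteq> 0" using ak by simp
  then show ?thesis using that z by blast
qed

lemma bform_dual_right:
  assumes dual: "\<forall>a\<in>F. \<forall>a'\<in>F. bform n a (y a') = (if a = a' then 1 else 0)"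
    and F: "finite F" "a \<in> F" and H: "in_H n a" "\<And>a'. a' \<in> F \<Longrightarrow> in_H n (y a')"
  shows "bform n a (\<Sum>a'\<in>F. hscale (c a') (y a')) = c a"
  using F dual by (simp add: bform_lincomb_right[OF H] if_distrib[of "\<lambda>z. _ * z"] cong: if_cong)

lemma bform_dual_left:
  assumes dual: "\<forall>a\<in>F. \<forall>a'\<in>F. bform n a (y a') = (if a = a' then 1 else 0)"
    and F: "finite F" "a \<in> F" and H: "in_H n (y a)" "\<And>a'. a' \<in> F \<Longrightarrow> in_H n a'"
  shows "bform n (\<Sum>a'\<in>F. hscale (c a') a') (y a) = c a"
  using F dual by (simp add: bform_lincomb_left[OF H] if_distrib[of "\<lambda>z. _ * z"] cong: if_cong)

lemma box_dual_vector:
  assumes F: "finite F" "F \<subseteq> box n N" and y: "y ` F \<subseteq> box n N"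
    and dual: "\<forall>a\<in>F. \<forall>a'\<in>F. bform n a (y a') = (if a = a' then 1 else 0)"
    and x: "x \<in> box n N" "x \<notin> hv.span F"
  obtains v where "v \<in> box n N" "bform n x v = 1" "\<And>a. a \<in> F \<Longrightarrow> bform n a v = 0"
proof -
  note box = subspace_box[of n N] and H = box_in_H
  have FH: "\<And>a. a \<in> F \<Longrightarrow> in_H n a" and yH: "\<And>a. a \<in> F \<Longrightarrow> in_H n (y a)"
    using F y H by blast+
  define r where "r = x - (\<Sum>a\<in>F. hscale (bform n x (y a)) a)"
  have r: "r \<in> box n N" unfolding r_def using F x
    by (intro hv.subspace_diff[OF box] hv.subspace_sum[OF box] hv.subspace_scale[OF box]) auto
  have "(\<Sum>a\<in>F. hscale (bform n x (y a)) a) \<in> hv.span F"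
    by (intro hv.span_sum hv.span_scale hv.span_base)
  then have "r \<noteq> 0" using x(2) unfolding r_def by auto
  then obtain z where z: "z \<in> box_basis n N" "bform n r z \<noteq> 0"
    using box_nondegenerate[OF r] by blast
  have zB: "z \<in> box n N" using z(1) box_basis_subset by blast
  define z' where "z' = z - (\<Sum>a\<in>F. hscale (bform n a z) (y a))"
  have z': "z' \<in> box n N" unfolding z'_def using zB y
    by (intro hv.subspace_diff[OF box] hv.subspace_sum[OF box] hv.subspace_scale[OF box]) auto
  have sumH: "in_H n (\<Sum>a\<in>F. hscale (bform n a z) (y a))" "in_H n (\<Sum>a\<in>F. hscale (bform n x (y a)) a)"
    using FH yH by (simp_all add: in_H_sum in_H_hscale)
  have Fz': "bform n a z' = 0" if "a \<in> F" for a
    unfolding z'_def using that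
    by (simp add: bform_diff_right[OF H[OF zB] sumH(1) FH[OF that]] bform_dual_right[OF dual F(1) that FH yH])
  have ry: "bform n r (y a) = 0" if "a \<in> F" for a
    unfolding r_def using that
    by (simp add: bform_diff_left[OF H[OF x(1)] sumH(2) yH[OF that]] bform_dual_left[OF dual F(1) that yH FH])
  have "bform n x z' = bform n r z'"
    unfolding r_def
    by (simp add: bform_diff_left[OF H[OF x(1)] sumH(2) H[OF z']] bform_lincomb_left[OF H[OF z'] FH] Fz')
  also have "\<dots> = bform n r z"
    unfolding z'_def
    by (simp add: bform_diff_right[OF H[OF zB] sumH(1) H[OF r]] bform_lincomb_right[OF H[OF r] yH] ry)
  finally have xz': "bform n x z' \<noteq> 0" using z(2) by simp
  show ?thesis
  proof (rule that[of "hscale (1 / bform n x z') z'"])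
    show "hscale (1 / bform n x z') z' \<in> box n N" using z' by (rule hv.subspace_scale[OF box])
    show "bform n x (hscale (1 / bform n x z') z') = 1"
      using xz' by (simp add: bform_hscale_right[OF H[OF z'] H[OF x(1)]])
    show "bform n a (hscale (1 / bform n x z') z') = 0" if "a \<in> F" for a
      using Fz'[OF that] by (simp add: bform_hscale_right[OF H[OF z'] FH[OF that]])
  qed
qed

lemma box_dual_family:
  assumes "finite A" "hv.independent A" "A \<subseteq> box n N"
  shows "\<exists>y. y ` A \<subseteq> box n N \<and> (\<forall>a\<in>A. \<forall>a'\<in>A. bform n a (y a') = (if a = a' then 1 else 0))"
  using assms
proof (induction A rule: finite_induct)
  case (insert x F)
  note box = subspace_box[of n N] and H = box_in_H
  have "hv.independent F" "x \<notin> hv.span F"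
    using insert.prems(1) insert.hyps(2) by (simp_all add: hv.independent_insert)
  moreover obtain y where y: "y ` F \<subseteq> box n N"
    and dual: "\<forall>a\<in>F. \<forall>a'\<in>F. bform n a (y a') = (if a = a' then 1 else 0)"
    using insert.IH[OF \<open>hv.independent F\<close>] insert.prems(2) by blast
  ultimately obtain v where v: "v \<in> box n N" "bform n x v = 1" "\<And>a. a \<in> F \<Longrightarrow> bform n a v = 0"
    using box_dual_vector[OF insert.hyps(1) _ y dual] insert.prems(2) by blast
  have xH: "in_H n x" and FH: "\<And>a. a \<in> F \<Longrightarrow> in_H n a" and yH: "\<And>a. a \<in> F \<Longrightarrow> in_H n (y a)"
    and vH: "in_H n v" using insert.prems(2) y v(1) H by blast+
  define y' where "y' a = (if a = x then v else y a - hscale (bform n x (y a)) v)" for a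
  show ?case
  proof (intro exI conjI ballI)
    show "y' ` insert x F \<subseteq> box n N"
      unfolding y'_def using v(1) y
      by (auto intro!: hv.subspace_diff[OF box] hv.subspace_scale[OF box])
    fix a a' assume a: "a \<in> insert x F" and a': "a' \<in> insert x F"
    have aH: "in_H n a" using a xH FH by blast
    show "bform n a (y' a') = (if a = a' then 1 else 0)"
    proof (cases "a' = x")
      case False
      then have "a' \<in> F" using a' by simp
      then have "bform n a (y' a') = bform n a (y a') - bform n x (y a') * bform n a v"
        unfolding y'_def using False
        by (simp add: bform_diff_right[OF yH in_H_hscale[OF vH] aH] bform_hscale_right[OF vH aH])
      then show ?thesis using a \<open>a' \<in> F\<close> dual v insert.hyps(2) by auto
    qed (use a v insert.hyps(2) y'_def in auto)
  qed
qed simp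

lemma card_isotropic_box_le:
  assumes A: "finite A" "hv.independent A" "A \<subseteq> box n N"
    and iso: "\<forall>u\<in>A. \<forall>v\<in>A. bform n u v = 0"
  shows "card A \<le> n * N"
proof -
  obtain y where y: "y ` A \<subseteq> box n N"
    and dual: "\<forall>a\<in>A. \<forall>a'\<in>A. bform n a (y a') = (if a = a' then 1 else 0)"
    using box_dual_family[OF A] by blast
  have AH: "\<And>a. a \<in> A \<Longrightarrow> in_H n a" and yH: "\<And>a. a \<in> A \<Longrightarrow> in_H n (y a)"
    using A(3) y box_in_H by blast+
  have inj: "inj_on y A"
    by (rule inj_onI) (metis dual one_neq_zero)
  have disj: "A \<inter> y ` A = {}"
    using iso dual by fastforce
  have "hv.independent (A \<union> y ` A)"
  proof (rule hv.independent_if_scalars_zero)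
    show "finite (A \<union> y ` A)" using A(1) by simp
    fix c v assume sum0: "(\<Sum>w\<in>A \<union> y ` A. hscale (c w) w) = 0" and v: "v \<in> A \<union> y ` A"
    have split: "(\<Sum>w\<in>A \<union> y ` A. hscale (c w) w)
        = (\<Sum>w\<in>A. hscale (c w) w) + (\<Sum>a\<in>A. hscale (c (y a)) (y a))"
      using A(1) disj inj by (simp add: sum.union_disjoint sum.reindex)
    have sumH: "in_H n (\<Sum>w\<in>A. hscale (c w) w)" "in_H n (\<Sum>a\<in>A. hscale (c (y a)) (y a))"
      using AH yH by (simp_all add: in_H_sum in_H_hscale)
    have cy: "c (y a) = 0" if a: "a \<in> A" for a
    proof -
      have "0 = bform n a (\<Sum>w\<in>A \<union> y ` A. hscale (c w) w)" using sum0 by simp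
      also have "\<dots> = (\<Sum>w\<in>A. c w * bform n a w) + c (y a)"
        unfolding split
        by (simp add: bform_add_right[OF sumH AH[OF a]] bform_lincomb_right[OF AH[OF a] AH]
            bform_dual_right[OF dual A(1) a AH[OF a] yH])
      finally show ?thesis using iso a by simp
    qed
    then have "(\<Sum>w\<in>A. hscale (c w) w) = 0" using sum0 split by simp
    then have "\<forall>w\<in>A. c w = 0" using hv.independentD[OF A(2) A(1) subset_refl] by blast
    then show "c v = 0" using v cy by auto
  qed
  moreover have "A \<union> y ` A \<subseteq> hv.span (box_basis n N)" using A(3) y box_subset_span by blast
  ultimately have "card (A \<union> y ` A) \<le> card (box_basis n N)"
    using hv.independent_span_bound[OF finite_box_basis] by blast
  moreover have "card (A \<union> y ` A) = card A + card A"
    using card_Un_disjoint[OF A(1) _ disj] card_image[OF inj] A(1) by simp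
  ultimately show ?thesis using card_box_basis by simp
qed

definition truncate :: "nat \<Rightarrow> hvec \<Rightarrow> hvec" where
  "truncate N w = (\<lambda>a k. if k < int N then w a k else 0)"

lemma truncate_in_box: "in_H n w \<Longrightarrow> order_ge (- int N) w \<Longrightarrow> truncate N w \<in> box n N"
  unfolding box_def truncate_def in_H_def order_ge_def by (auto intro!: exI[of _ "- int N"])

lemma in_H_truncate_tail: "in_H n w \<Longrightarrow> in_H n (w - truncate N w)"
  unfolding in_H_def truncate_def by auto

lemma order_ge_truncate_tail: "order_ge (int N) (w - truncate N w)"
  unfolding order_ge_def truncate_def by simp

lemma perp_of_perp_box:
  assumes big: "\<forall>v. in_H n v \<and> order_ge (int N) v \<longrightarrow> v \<in> W"
    and small: "\<forall>w\<in>W. order_ge (- int N) w" and WH: "\<forall>w\<in>W. in_H n w" and subW: "hv.subspace W"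
    and v: "v \<in> box n N" and perp: "\<forall>u\<in>W \<inter> box n N. bform n u v = 0"
    and w: "w \<in> W"
  shows "bform n w v = 0"
proof -
  have tail: "in_H n (w - truncate N w)" "order_ge (int N) (w - truncate N w)"
    using in_H_truncate_tail WH w order_ge_truncate_tail by blast+
  then have "w - truncate N w \<in> W" using big by blast
  from hv.subspace_diff[OF subW w this] have "truncate N w \<in> W" by simp
  moreover have trunc: "truncate N w \<in> box n N" using truncate_in_box WH small w by blast
  ultimately have t1: "bform n (truncate N w) v = 0" using perp by blast
  have "order_ge (- int N) v" using v unfolding box_def by blast
  then have t2: "bform n (w - truncate N w) v = 0" using bform_eq_0_if_order_ge[OF tail(2)] by simp
  show ?thesis using bform_add_left[OF box_in_H[OF trunc] tail(1) box_in_H[OF v]] t1 t2 by simp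
qed

lemma card_box_ge_if_coisotropic:
  assumes big: "\<forall>v. in_H n v \<and> order_ge (int N) v \<longrightarrow> v \<in> W"
    and small: "\<forall>w\<in>W. order_ge (- int N) w" and WH: "\<forall>w\<in>W. in_H n w" and subW: "hv.subspace W"
    and co: "\<forall>v. in_H n v \<and> (\<forall>u\<in>W. bform n u v = 0) \<longrightarrow> v \<in> W"
    and A: "finite A" "hv.independent A" "A \<subseteq> W \<inter> box n N" and span: "W \<inter> box n N \<subseteq> hv.span A"
  shows "n * N \<le> card A"
proof (rule ccontr)
  assume less: "\<not> n * N \<le> card A"
  note box = subspace_box[of n N] and H = box_in_H
  have AB: "A \<subseteq> box n N" using A(3) by blast
  have AH: "\<And>a. a \<in> A \<Longrightarrow> in_H n a" using AB H by blast
  obtain y where y: "y ` A \<subseteq> box n N"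
    and dual: "\<forall>a\<in>A. \<forall>a'\<in>A. bform n a (y a') = (if a = a' then 1 else 0)"
    using box_dual_family[OF A(1,2) AB] by blast
  have yH: "\<And>a. a \<in> A \<Longrightarrow> in_H n (y a)" using y H by blast
  define T where "T = A \<union> y ` A"
  have "card T \<le> card A + card A"
    unfolding T_def using card_Un_le[of A "y ` A"] card_image_le[OF A(1), of y] by simp
  then have "card T < card (box_basis n N)" using less card_box_basis by simp
  moreover have "finite T" unfolding T_def using A(1) by simp
  ultimately have "\<not> box_basis n N \<subseteq> hv.span T"
    using hv.independent_span_bound[OF _ independent_box_basis, of T] by (meson not_le)
  then obtain z where z: "z \<in> box_basis n N" "z \<notin> hv.span T" by blast
  have zB: "z \<in> box n N" using z(1) box_basis_subset by blast
  define z' where "z' = z - (\<Sum>a\<in>A. hscale (bform n a z) (y a))"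
  have sumH: "in_H n (\<Sum>a\<in>A. hscale (bform n a z) (y a))" using yH by (simp add: in_H_sum in_H_hscale)
  have z'B: "z' \<in> box n N" unfolding z'_def using zB y
    by (intro hv.subspace_diff[OF box] hv.subspace_sum[OF box] hv.subspace_scale[OF box]) auto
  have Az': "bform n a z' = 0" if "a \<in> A" for a
    unfolding z'_def using that
    by (simp add: bform_diff_right[OF H[OF zB] sumH AH[OF that]] bform_dual_right[OF dual A(1) that AH yH])
  have "\<forall>u\<in>W \<inter> box n N. bform n u z' = 0"
  proof
    fix u assume "u \<in> W \<inter> box n N"
    then have "u \<in> hv.span A" using span by blast
    then obtain c where "u = (\<Sum>a\<in>A. hscale (c a) a)"
      using hv.span_finite[OF A(1)] by auto
    then show "bform n u z' = 0" by (simp add: bform_lincomb_left[OF H[OF z'B] AH] Az')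
  qed
  then have "\<forall>w\<in>W. bform n w z' = 0"
    using perp_of_perp_box[OF big small WH subW z'B] by blast
  then have "z' \<in> W" using co H[OF z'B] by blast
  then have "z' \<in> hv.span A" using span z'B by blast
  then have "z' \<in> hv.span T" unfolding T_def by (rule set_rev_mp[OF _ hv.span_mono]) blast
  moreover have "(\<Sum>a\<in>A. hscale (bform n a z) (y a)) \<in> hv.span T"
    unfolding T_def by (intro hv.span_sum hv.span_scale hv.span_base) blast
  ultimately have "z' + (\<Sum>a\<in>A. hscale (bform n a z) (y a)) \<in> hv.span T" by (rule hv.span_add)
  then show False using z(2) unfolding z'_def by simp
qed

lemma (in vector_space) independent_image_if_scalars_zero:
  fixes m :: nat
  assumes "\<And>l. (\<Sum>i<m. scale (l i) (g i)) = 0 \<Longrightarrow> \<forall>i<m. l i = 0"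
  shows "inj_on g {..<m}" and "independent (g ` {..<m})"
proof -
  show inj: "inj_on g {..<m}"
  proof (rule inj_onI, rule ccontr)
    fix i j assume ij: "i \<in> {..<m}" "j \<in> {..<m}" "g i = g j" "i \<noteq> j"
    define l where "l k = (if k = i then 1 else if k = j then -1 else (0::'a))" for k
    have "(\<Sum>k<m. scale (l k) (g k)) = (\<Sum>k<m. (if k = i then g i else 0) - (if k = j then g j else 0))"
      using ij(4) by (intro sum.cong) (auto simp: l_def)
    also have "\<dots> = 0" using ij by (simp add: sum_subtractf)
    finally have "l i = 0" using assms ij(1) by blast
    then show False by (simp add: l_def)
  qed
  show "independent (g ` {..<m})"
  proof (rule independent_if_scalars_zero)
    fix f x assume "(\<Sum>x\<in>g ` {..<m}. scale (f x) x) = 0" and x: "x \<in> g ` {..<m}"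
    then have "(\<Sum>i<m. scale (f (g i)) (g i)) = 0" by (simp add: sum.reindex[OF inj])
    then show "f x = 0" using assms[of "\<lambda>i. f (g i)"] x by auto
  qed simp
qed

lemma (in vector_space) scalars_zero_if_independent_image:
  fixes m :: nat
  assumes inj: "inj_on g {..<m}" and ind: "independent (g ` {..<m})"
    and sum0: "(\<Sum>i<m. scale (l i) (g i)) = 0"
  shows "\<forall>i<m. l i = 0"
proof -
  let ?u = "\<lambda>x. l (the_inv_into {..<m} g x)"
  have "(\<Sum>x\<in>g ` {..<m}. scale (?u x) x) = 0"
    using sum0 by (simp add: sum.reindex[OF inj] the_inv_into_f_f[OF inj])
  then have "\<forall>x\<in>g ` {..<m}. ?u x = 0"
    using independentD[OF ind finite_imageI[OF finite_lessThan] subset_refl, where u = ?u] by blast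
  then show ?thesis by (simp add: the_inv_into_f_f[OF inj])
qed
lemma quot_dim_iff:
  "quot_dim W V d \<longleftrightarrow> (\<exists>f. (\<forall>i<d. f i \<in> W) \<and>
     (\<forall>w\<in>W. \<exists>!c. (\<forall>i. d \<le> i \<longrightarrow> c i = 0) \<and> w - (\<Sum>i<d. hscale (c i) (f i)) \<in> V))"
proof -
  have "(\<lambda>a k. w a k - (\<Sum>i<d. c i * f i a k)) = w - (\<Sum>i<d. hscale (c i) (f i))" for w c f
    by (simp add: fun_eq_iff sum_apply hscale_apply)
  then show ?thesis unfolding quot_dim_def by simp
qed

lemma quot_dim_of_complement:
  assumes V: "hv.subspace V" and B: "finite B" "hv.independent B" "card B = d" "B \<subseteq> W"
    and decomp: "\<forall>w\<in>W. \<exists>b\<in>hv.span B. w - b \<in> V" and disj: "hv.span B \<inter> V \<subseteq> {0}"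
  shows "quot_dim W V d"
proof -
  obtain f where f: "bij_betw f {..<d} B"
    using ex_bij_betw_nat_finite[OF B(1)] B(3) by (auto simp: atLeast0LessThan)
  have inj: "inj_on f {..<d}" and fB: "f ` {..<d} = B" using f by (auto simp: bij_betw_def)
  have lincomb_B: "(\<Sum>x\<in>B. hscale (c x) x) = (\<Sum>i<d. hscale (c (f i)) (f i))" for c
    unfolding fB[symmetric] by (simp add: sum.reindex[OF inj])
  show ?thesis
    unfolding quot_dim_iff
  proof (intro exI conjI ballI allI impI)
    show "f i \<in> W" if "i < d" for i using that fB B(4) by blast
    fix w assume "w \<in> W"
    then obtain b where b: "b \<in> hv.span B" "w - b \<in> V" using decomp by blast
    then obtain c where bc: "b = (\<Sum>x\<in>B. hscale (c x) x)" using hv.span_finite[OF B(1)] by auto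
    have b_eq: "b = (\<Sum>i<d. hscale (if i < d then c (f i) else 0) (f i))"
      unfolding bc lincomb_B by (intro sum.cong) auto
    show "\<exists>!c. (\<forall>i. d \<le> i \<longrightarrow> c i = 0) \<and> w - (\<Sum>i<d. hscale (c i) (f i)) \<in> V"
    proof (rule ex1I[of _ "\<lambda>i. if i < d then c (f i) else 0"])
      show "(\<forall>i. d \<le> i \<longrightarrow> (if i < d then c (f i) else 0) = 0)
          \<and> w - (\<Sum>i<d. hscale (if i < d then c (f i) else 0) (f i)) \<in> V"
        using b(2) b_eq by simp
    next
      fix c' assume c': "(\<forall>i. d \<le> i \<longrightarrow> c' i = 0) \<and> w - (\<Sum>i<d. hscale (c' i) (f i)) \<in> V"
      define e where "e i = (if i < d then c (f i) else 0) - c' i" for i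
      have "(\<Sum>i<d. hscale (e i) (f i)) = (w - (\<Sum>i<d. hscale (c' i) (f i))) - (w - b)"
        unfolding e_def b_eq by (simp add: hv.scale_left_diff_distrib sum_subtractf)
      moreover have "(w - (\<Sum>i<d. hscale (c' i) (f i))) - (w - b) \<in> V"
        using hv.subspace_diff[OF V] c' b(2) by blast
      ultimately have "(\<Sum>i<d. hscale (e i) (f i)) \<in> V" by simp
      moreover have "(\<Sum>i<d. hscale (e i) (f i)) \<in> hv.span B"
        using fB by (intro hv.span_sum hv.span_scale hv.span_base) auto
      ultimately have "(\<Sum>i<d. hscale (e i) (f i)) = 0" using disj by blast
      then have "\<forall>i<d. e i = 0"
        using hv.scalars_zero_if_independent_image[OF inj] B(2) fB by blast
      then show "c' = (\<lambda>i. if i < d then c (f i) else 0)"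
        using c' by (auto simp: fun_eq_iff e_def)
    qed
  qed
qed

lemma Hsub_mono: "J \<le> J' \<Longrightarrow> Hsub n J \<subseteq> Hsub n J'"
  unfolding Hsub_def by auto

lemma vidx_inj:
  assumes "a < n" "a' < n" "vidx n a k = vidx n a' k'"
  shows "a = a' \<and> k = k'"
proof -
  have e: "int n * (k' - k) = int a' - int a" using assms(3) unfolding vidx_def by (simp add: algebra_simps)
  have "k = k'"
  proof (rule ccontr)
    assume "k \<noteq> k'"
    then have "1 \<le> \<bar>k' - k\<bar>" by simp
    then have "int n \<le> \<bar>int n * (k' - k)\<bar>" by (simp add: abs_mult mult_le_cancel_left1)
    moreover have "\<bar>int a' - int a\<bar> < int n" using assms(1,2) by simp
    ultimately show False using e by simp
  qed
  then show ?thesis using e by simp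
qed

lemma vidx_surj:
  assumes "1 \<le> n"
  obtains a k where "a < n" "vidx n a k = J"
proof (rule that)
  show "nat ((J - 1) mod int n) < n" using assms by (simp add: nat_less_iff)
  show "vidx n (nat ((J - 1) mod int n)) (- ((J - 1) div int n) - 1) = J"
    using assms unfolding vidx_def by (simp add: algebra_simps)
qed

lemma quot_dim_Hsub_pred:
  assumes n: "1 \<le> n" and HW: "Hsub n J \<subseteq> W" and qd: "quot_dim W (Hsub n J) d"
  shows "quot_dim W (Hsub n (J - 1)) (Suc d)"
proof -
  have HJ: "hv.subspace (Hsub n J)" and HJ': "hv.subspace (Hsub n (J - 1))"
    using lin_subspace_Hsub unfolding lin_subspace_iff by blast+
  obtain a k where ak: "a < n" "vidx n a k = J" using vidx_surj[OF n] .
  define e where "e = basis_vec a k"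
  have only: "b = a \<and> j = k" if "b < n" "J \<le> vidx n b j" "h \<in> Hsub n J" "h b j \<noteq> 0" for b j h
  proof -
    have "\<not> J < vidx n b j" using that(1,3,4) unfolding Hsub_def by blast
    then have "vidx n b j = vidx n a k" using that(2) ak(2) by simp
    then show ?thesis using vidx_inj[OF that(1) ak(1)] by blast
  qed
  have eJ: "e \<in> Hsub n J"
    unfolding Hsub_def e_def using in_H_basis_vec[OF ak(1)] ak by (auto simp: basis_vec_def)
  have proj: "h - hscale (h a k) e \<in> Hsub n (J - 1)" if h: "h \<in> Hsub n J" for h
  proof -
    have "in_H n (h - hscale (h a k) e)"
      using h in_H_diff in_H_hscale in_H_basis_vec[OF ak(1)] unfolding Hsub_def e_def by blast
    moreover have "(h - hscale (h a k) e) b j = 0" if "b < n" "J - 1 < vidx n b j" for b j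
    proof (cases "b = a \<and> j = k")
      case False
      moreover have "J \<le> vidx n b j" using that(2) by simp
      ultimately have "h b j = 0" using only[OF that(1) _ h] by blast
      then show ?thesis using False by (auto simp: e_def basis_vec_def hscale_apply)
    qed (simp add: e_def basis_vec_def hscale_apply)
    ultimately show ?thesis unfolding Hsub_def by blast
  qed
  have e_notin: "c = 0" if "hscale c e \<in> Hsub n (J - 1)" for c
  proof -
    have "hscale c e a k = 0" using that ak unfolding Hsub_def by auto
    then show ?thesis by (simp add: e_def basis_vec_def hscale_apply)
  qed
  obtain f where fW: "\<forall>i<d. f i \<in> W"
    and uniq: "\<forall>w\<in>W. \<exists>!c. (\<forall>i. d \<le> i \<longrightarrow> c i = 0) \<and> w - (\<Sum>i<d. hscale (c i) (f i)) \<in> Hsub n J"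
    using qd unfolding quot_dim_iff by blast
  define f' where "f' = f(d := e)"
  have sum_f': "(\<Sum>i<Suc d. hscale (c i) (f' i)) = (\<Sum>i<d. hscale (c i) (f i)) + hscale (c d) e" for c
    unfolding f'_def by (simp add: sum.lessThan_Suc)
  show ?thesis
    unfolding quot_dim_iff
  proof (intro exI conjI ballI allI impI)
    show "f' i \<in> W" if "i < Suc d" for i using that fW eJ HW by (auto simp: f'_def less_Suc_eq)
    fix w assume w: "w \<in> W"
    define P where "P c \<longleftrightarrow> (\<forall>i. d \<le> i \<longrightarrow> c i = 0) \<and> w - (\<Sum>i<d. hscale (c i) (f i)) \<in> Hsub n J"
      for c
    have "\<exists>!c. P c" unfolding P_def using uniq w by blast
    then obtain c where "P c" by blast
    then have c: "\<forall>i. d \<le> i \<longrightarrow> c i = 0" "w - (\<Sum>i<d. hscale (c i) (f i)) \<in> Hsub n J"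
      unfolding P_def by blast+
    let ?h = "w - (\<Sum>i<d. hscale (c i) (f i))"
    show "\<exists>!c. (\<forall>i. Suc d \<le> i \<longrightarrow> c i = 0) \<and> w - (\<Sum>i<Suc d. hscale (c i) (f' i)) \<in> Hsub n (J - 1)"
    proof (rule ex1I[of _ "c(d := ?h a k)"])
      show "(\<forall>i. Suc d \<le> i \<longrightarrow> (c(d := ?h a k)) i = 0)
          \<and> w - (\<Sum>i<Suc d. hscale ((c(d := ?h a k)) i) (f' i)) \<in> Hsub n (J - 1)"
        using c proj[OF c(2)] by (simp add: f'_def sum.lessThan_Suc diff_diff_eq)
    next
      fix c2 assume c2: "(\<forall>i. Suc d \<le> i \<longrightarrow> c2 i = 0)
          \<and> w - (\<Sum>i<Suc d. hscale (c2 i) (f' i)) \<in> Hsub n (J - 1)"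
      let ?h2 = "w - (\<Sum>i<d. hscale (c2 i) (f i))"
      have "?h2 = (w - (\<Sum>i<Suc d. hscale (c2 i) (f' i))) + hscale (c2 d) e"
        unfolding sum_f' by simp
      also have "\<dots> \<in> Hsub n J"
        using c2 Hsub_mono[of "J - 1" J n] eJ by (intro hv.subspace_add[OF HJ] hv.subspace_scale[OF HJ]) auto
      finally have "(\<forall>i. d \<le> i \<longrightarrow> (c2(d := 0)) i = 0) \<and> w - (\<Sum>i<d. hscale ((c2(d := 0)) i) (f i)) \<in> Hsub n J"
        using c2 by (auto simp: le_Suc_eq)
      then have "P (c2(d := 0))" unfolding P_def by simp
      with \<open>\<exists>!c. P c\<close> \<open>P c\<close> have c2c: "c2(d := 0) = c" by blast
      then have "(\<Sum>i<d. hscale (c2 i) (f i)) = (\<Sum>i<d. hscale (c i) (f i))"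
        by (intro sum.cong) auto
      then have h2h: "?h2 = ?h" by simp
      obtain x where x: "x = ?h a k" by blast
      have "hscale (c2 d - x) e = (?h - hscale x e) - (?h2 - hscale (c2 d) e)"
        unfolding h2h by (simp add: hv.scale_left_diff_distrib)
      also have "\<dots> \<in> Hsub n (J - 1)"
      proof (rule hv.subspace_diff[OF HJ'])
        show "?h - hscale x e \<in> Hsub n (J - 1)" using proj[OF c(2)] x by simp
        show "?h2 - hscale (c2 d) e \<in> Hsub n (J - 1)" using c2 unfolding sum_f' by (simp add: diff_diff_eq)
      qed
      finally have "c2 d - x = 0" by (rule e_notin)
      then have "c2 d = ?h a k" using x by simp
      then show "c2 = c(d := ?h a k)" using c2c by (auto simp: fun_eq_iff split: if_splits)
    qed
  qed
qed

section \<open>Elements of \<open>gr\<^sup>(\<^sup>2\<^sup>)\<close> are Lagrangian lattices\<close>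

lemma order_ge_if_perp:
  assumes y: "in_H n y" and perp: "\<forall>u. in_H n u \<and> order_ge N u \<longrightarrow> bform n u y = 0"
  shows "order_ge (- N) y"
  unfolding order_ge_def
proof (intro allI impI)
  fix a k assume k: "k < - N"
  show "y a k = 0"
  proof (cases "a < n")
    case True
    have "order_ge N (basis_vec a (-1 - k))"
      using order_ge_mono[OF order_ge_basis_vec] k by simp
    then have "bform n (basis_vec a (-1 - k)) y = 0" using perp in_H_basis_vec[OF True] by blast
    then show ?thesis using bform_basis_vec_left[OF True y, of "-1 - k"] by simp
  qed (use y in \<open>simp add: in_H_def\<close>)
qed

lemma coisotropic_if_quot_dim:
  assumes subW: "hv.subspace W" and WH: "\<forall>w\<in>W. in_H n w" and iso: "\<forall>u\<in>W. \<forall>v\<in>W. bform n u v = 0"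
    and HW: "Hsub n (- (int n * int N)) \<subseteq> W" and small: "\<forall>w\<in>W. order_ge (- int N) w"
    and qd: "quot_dim W (Hsub n (- (int n * int N))) (n * N)"
    and y: "in_H n y" "\<forall>u\<in>W. bform n u y = 0"
  shows "y \<in> W"
proof (rule ccontr)
  assume yW: "y \<notin> W"
  let ?J = "- (int n * int N)" and ?m = "n * N"
  have subJ: "hv.subspace (Hsub n ?J)" using lin_subspace_Hsub unfolding lin_subspace_iff by blast
  have ysmall: "order_ge (- int N) y"
    using order_ge_if_perp[OF y(1)] y(2) HW unfolding Hsub_order_ge by blast
  obtain f where fW: "\<forall>i<?m. f i \<in> W"
    and uniq: "\<forall>w\<in>W. \<exists>!c. (\<forall>i. ?m \<le> i \<longrightarrow> c i = 0) \<and> w - (\<Sum>i<?m. hscale (c i) (f i)) \<in> Hsub n ?J"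
    using qd unfolding quot_dim_iff by blast
  have tail: "w - truncate N w \<in> Hsub n ?J" if "in_H n w" for w
    unfolding Hsub_order_ge using in_H_truncate_tail[OF that] order_ge_truncate_tail by blast
  define g where "g i = truncate N (if i < ?m then f i else y)" for i
  have gB: "g i \<in> box n N" for i
    unfolding g_def using truncate_in_box WH fW small y(1) ysmall by auto
  have gW: "g i \<in> W" if "i < ?m" for i
  proof -
    have "f i \<in> W" "f i - truncate N (f i) \<in> W" using HW tail WH fW that by blast+
    then have "f i - (f i - truncate N (f i)) \<in> W" by (rule hv.subspace_diff[OF subW])
    then show ?thesis unfolding g_def using that by simp
  qed
  have g_perp: "bform n w (g ?m) = 0" if "w \<in> W" for w
  proof -
    have "y - truncate N y \<in> W" using HW tail[OF y(1)] by blast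
    then show ?thesis
      using bform_diff_right[OF y(1) in_H_truncate_tail[OF y(1)] WH[rule_format, OF that]] iso that y(2)
      unfolding g_def by (simp add: diff_diff_cancel)
  qed
  have indep: "\<forall>i<Suc ?m. l i = 0" if l: "(\<Sum>i<Suc ?m. hscale (l i) (g i)) = 0" for l
  proof -
    define S where "S = (\<Sum>i<?m. hscale (l i) (f i)) + hscale (l ?m) y"
    have "S = S - (\<Sum>i<Suc ?m. hscale (l i) (g i))" using l by simp
    also have "\<dots> = (\<Sum>i<?m. hscale (l i) (f i - g i)) + hscale (l ?m) (y - g ?m)"
      unfolding S_def by (simp add: g_def hv.scale_right_diff_distrib sum_subtractf)
    also have "\<dots> \<in> Hsub n ?J"
      using tail WH fW y(1) unfolding g_def
      by (intro hv.subspace_add[OF subJ] hv.subspace_sum[OF subJ] hv.subspace_scale[OF subJ]) auto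
    finally have SJ: "S \<in> Hsub n ?J" .
    have fS: "(\<Sum>i<?m. hscale (l i) (f i)) \<in> W"
      using fW by (intro hv.subspace_sum[OF subW] hv.subspace_scale[OF subW]) auto
    have "l ?m = 0"
    proof (rule ccontr)
      assume "l ?m \<noteq> 0"
      then have "y = hscale (1 / l ?m) (S - (\<Sum>i<?m. hscale (l i) (f i)))" unfolding S_def by simp
      moreover have "S - (\<Sum>i<?m. hscale (l i) (f i)) \<in> W"
        using HW SJ fS by (intro hv.subspace_diff[OF subW]) auto
      ultimately show False using yW hv.subspace_scale[OF subW] by simp
    qed
    define P where "P c \<longleftrightarrow> (\<forall>i. ?m \<le> i \<longrightarrow> c i = 0) \<and> 0 - (\<Sum>i<?m. hscale (c i) (f i)) \<in> Hsub n ?J"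
      for c
    have "\<exists>!c. P c" unfolding P_def using uniq hv.subspace_0[OF subW] by blast
    moreover have "P (\<lambda>i. if i < ?m then - l i else 0)"
      using SJ \<open>l ?m = 0\<close> unfolding S_def P_def by (simp add: sum_negf)
    moreover have "P (\<lambda>_. 0)" unfolding P_def using hv.subspace_0[OF subJ] by simp
    ultimately have "(\<lambda>i. if i < ?m then - l i else 0) = (\<lambda>_. 0)" by blast
    then have "l i = 0" if "i < ?m" for i using fun_cong[of _ _ i] that by fastforce
    then show ?thesis using \<open>l ?m = 0\<close> less_Suc_eq by auto
  qed
  note ind = hv.independent_image_if_scalars_zero[OF indep]
  have "card (g ` {..<Suc ?m}) \<le> ?m"
  proof (rule card_isotropic_box_le)
    show "finite (g ` {..<Suc ?m})" "hv.independent (g ` {..<Suc ?m})" "g ` {..<Suc ?m} \<subseteq> box n N"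
      using ind gB by auto
    have "bform n (g i) (g j) = 0" if ij: "i < Suc ?m" "j < Suc ?m" for i j
    proof -
      have gH: "in_H n (g k)" for k using gB box_in_H by blast
      consider "i < ?m" "j < ?m" | "i < ?m" "j = ?m" | "i = ?m" "j < ?m" | "i = ?m" "j = ?m"
        using ij unfolding less_Suc_eq by blast
      then show ?thesis
      proof cases
        case 3
        then show ?thesis using bform_swap[OF gH gH, of j i] g_perp gW by simp
      qed (use iso gW g_perp bform_self[OF gH] in simp_all)
    qed
    then show "\<forall>u\<in>g ` {..<Suc ?m}. \<forall>v\<in>g ` {..<Suc ?m}. bform n u v = 0" by blast
  qed
  moreover have "card (g ` {..<Suc ?m}) = Suc ?m" using card_image[OF ind(1)] by simp
  ultimately show False by simp
qed

lemma gr2_imp_lagrangian_lattice: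
  assumes n: "1 \<le> n" and W: "W \<in> gr2 n"
  shows "lagrangian_lattice n W"
proof -
  have sub: "lin_subspace n W" and tm: "\<forall>u\<in>W. tmul u \<in> W" and iso: "\<forall>u\<in>W. \<forall>v\<in>W. bform n u v = 0"
    using W unfolding gr2_def gr0_def Gr2_def Gr0_def by auto
  have subW: "hv.subspace W" and WH: "\<forall>w\<in>W. in_H n w" using sub unfolding lin_subspace_iff by auto
  obtain J0 where J0: "J0 \<le> 0" "\<forall>J\<le>J0. Hsub n J \<subseteq> W \<and> quot_dim W (Hsub n J) (nat (- J))"
    using W unfolding gr2_def gr0_def Gr0_def by blast
  define N where "N = nat (- J0)"
  have "- (int n * int N) \<le> J0"
    using J0(1) n mult_right_mono[of 1 "int n" "int N"] unfolding N_def by simp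
  then have HW: "Hsub n (- (int n * int N)) \<subseteq> W"
    and qd: "quot_dim W (Hsub n (- (int n * int N))) (n * N)"
    using J0(2) by (auto simp: nat_mult_distrib)
  have small: "\<forall>w\<in>W. order_ge (- int N) w"
    using order_ge_if_perp WH HW iso unfolding Hsub_order_ge by blast
  have co: "\<forall>v. in_H n v \<and> (\<forall>u\<in>W. bform n u v = 0) \<longrightarrow> v \<in> W"
    using coisotropic_if_quot_dim[OF subW WH iso HW small qd] by blast
  show ?thesis unfolding lagrangian_lattice_def using sub tm iso co small by blast
qed

section \<open>Lagrangian lattices belong to \<open>gr\<^sup>(\<^sup>2\<^sup>)\<close>\<close>

lemma quot_dim_lagrangian_lattice:
  assumes X: "lagrangian_lattice n W" and N: "\<forall>w\<in>W. order_ge (- int N) w"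
  shows "quot_dim W (Hsub n (- (int n * int N))) (n * N)"
proof -
  note subW = lagrangian_latticeD(1)[OF X] and WH = lagrangian_latticeD(2)[OF X]
  have big: "\<forall>v. in_H n v \<and> order_ge (int N) v \<longrightarrow> v \<in> W"
    using N bform_eq_0_if_order_ge[of "- int N" _ "int N"] lagrangian_latticeD(5)[OF X] by auto
  have subV: "hv.subspace (Hsub n (- (int n * int N)))"
    using lin_subspace_Hsub unfolding lin_subspace_iff by blast
  have subS: "hv.subspace (W \<inter> box n N)" using hv.subspace_inter[OF subW subspace_box] .
  obtain B where B: "B \<subseteq> W \<inter> box n N" "hv.independent B" "W \<inter> box n N \<subseteq> hv.span B"
    by (rule hv.basis_exists)
  have finB: "finite B"
    using hv.independent_span_bound[OF finite_box_basis B(2)] B(1) box_subset_span by blast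
  have "card B \<le> n * N"
    using card_isotropic_box_le[OF finB B(2)] B(1) lagrangian_latticeD(4)[OF X] by blast
  moreover have "n * N \<le> card B"
    using card_box_ge_if_coisotropic[OF big N _ subW _ finB B(2,1,3)] WH lagrangian_latticeD(5)[OF X]
    by blast
  ultimately have cardB: "card B = n * N" by simp
  show ?thesis
  proof (rule quot_dim_of_complement[OF subV finB B(2) cardB])
    show "B \<subseteq> W" using B(1) by blast
    show "\<forall>w\<in>W. \<exists>b\<in>hv.span B. w - b \<in> Hsub n (- (int n * int N))"
    proof
      fix w assume w: "w \<in> W"
      have "w - truncate N w \<in> W"
        using big in_H_truncate_tail WH w order_ge_truncate_tail by blast
      from hv.subspace_diff[OF subW w this] have "truncate N w \<in> W" by simp
      then have "truncate N w \<in> hv.span B" using B(3) truncate_in_box WH N w by blast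
      moreover have "w - truncate N w \<in> Hsub n (- (int n * int N))"
        unfolding Hsub_order_ge using in_H_truncate_tail WH w order_ge_truncate_tail by blast
      ultimately show "\<exists>b\<in>hv.span B. w - b \<in> Hsub n (- (int n * int N))" by blast
    qed
    have spanB: "hv.span B \<subseteq> box n N" using B(1) by (intro hv.span_minimal[OF _ subspace_box]) blast
    show "hv.span B \<inter> Hsub n (- (int n * int N)) \<subseteq> {0}"
    proof
      fix x assume "x \<in> hv.span B \<inter> Hsub n (- (int n * int N))"
      then have "x \<in> box n N" "order_ge (int N) x" using spanB unfolding Hsub_order_ge by auto
      then have "x a k = 0" for a k unfolding box_def order_ge_def by (cases "k < int N") auto
      then show "x \<in> {0}" by (simp add: fun_eq_iff)
    qed
  qed
qed

lemma lagrangian_lattice_imp_gr2: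
  assumes n: "1 \<le> n" and X: "lagrangian_lattice n W"
  shows "W \<in> gr2 n"
proof -
  obtain N :: nat where N: "\<forall>w\<in>W. order_ge (- int N) w"
  proof -
    obtain N0 where "\<forall>w\<in>W. order_ge N0 w" using lagrangian_latticeD(6)[OF X] by blast
    moreover have "- int (nat (- N0)) \<le> N0" by simp
    ultimately show ?thesis using that[of "nat (- N0)"] order_ge_mono by blast
  qed
  define J0 where "J0 = - (int n * int N)"
  have HW: "Hsub n J \<subseteq> W" if "J \<le> J0" for J
  proof
    fix v assume "v \<in> Hsub n J"
    then have "v \<in> Hsub n J0" using Hsub_mono that by blast
    then have v: "in_H n v" "order_ge (int N) v" unfolding J0_def Hsub_order_ge by auto
    have "\<forall>u\<in>W. bform n u v = 0" using N v(2) bform_eq_0_if_order_ge[of "- int N" _ "int N"] by auto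
    then show "v \<in> W" using lagrangian_latticeD(5)[OF X v(1)] by blast
  qed
  have qd: "quot_dim W (Hsub n (J0 - int m)) (n * N + m)" for m
  proof (induction m)
    case 0
    then show ?case unfolding J0_def using quot_dim_lagrangian_lattice[OF X N] by simp
  next
    case (Suc m)
    have "quot_dim W (Hsub n (J0 - int m - 1)) (Suc (n * N + m))"
      by (rule quot_dim_Hsub_pred[OF n HW Suc.IH]) simp
    then show ?case by (simp add: algebra_simps)
  qed
  have "Hsub n J \<subseteq> W \<and> quot_dim W (Hsub n J) (nat (- J))" if "J \<le> J0" for J
  proof -
    have "nat (- J) = nat (int (n * N) + (J0 - J))" unfolding J0_def by simp
    also have "\<dots> = n * N + nat (J0 - J)" using that by (subst nat_add_distrib) (auto simp: nat_mult_distrib)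
    finally have "J = J0 - int (nat (J0 - J))" "nat (- J) = n * N + nat (J0 - J)"
      using that by auto
    then show ?thesis using HW[OF that] qd[of "nat (J0 - J)"] by metis
  qed
  moreover have "J0 \<le> 0" unfolding J0_def by simp
  ultimately have "W \<in> Gr0 n"
    unfolding Gr0_def using X unfolding lagrangian_lattice_def by blast
  then show ?thesis
    unfolding gr2_def gr0_def Gr2_def using lagrangian_latticeD(3,4)[OF X] by blast
qed

theorem theorem2:
  fixes n :: nat and W :: "hvec set"
  assumes "1 \<le> n"
  shows "W \<in> gr2 n \<longleftrightarrow> (\<exists>g \<in> GL2 n. W = act n g ` Hsub n 0)"
proof
  assume "W \<in> gr2 n"
  then show "\<exists>g \<in> GL2 n. W = act n g ` Hsub n 0"
    by (rule lagrangian_lattice_orbit[OF gr2_imp_lagrangian_lattice[OF assms]])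
next
  assume "\<exists>g \<in> GL2 n. W = act n g ` Hsub n 0"
  then obtain g where "g \<in> GL2 n" "W = act n g ` Hsub n 0" by blast
  then show "W \<in> gr2 n"
    using lagrangian_lattice_imp_gr2[OF assms] lagrangian_lattice_act[OF lagrangian_lattice_Hsub_0]
    by simp
qed

end
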